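(* Let $s\in\mathbb N$, $f\in C^\infty([0,1]^s)$, and let $A_s,B_s>0$, $c_s$ and $N_m$ be as in the context. For $m\in\mathbb N$ let $$\mathrm{SUM}_{1,m}=\sum_{\boldsymbol k\in Q_{N_m}}Z(\boldsymbol k)S(\boldsymbol k)\hat f(\boldsymbol k),\qquad \mathrm{SUM}'_{1,m}=\sum_{\boldsymbol k\in Q_{N_m}}Z(\boldsymbol k)S'(\boldsymbol k)\hat f(\boldsymbol k),$$ where the $S'(\boldsymbol k)$ are i.i.d. uniform on $\{-1,1\}$ and independent of everything else. Under the complete random design there exist constants $d_s$ and $\underline m_s$ depending on $s$ such that for all $m\ge\underline m_s$, $$d_{TV}(\mathrm{SUM}_{1,m},\mathrm{SUM}'_{1,m})\le\frac1{c_sm}+m^{d_s}2^{-4c_sm}.$$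
   Context: Binary digits: for $k\in\mathbb N_0$, $k=\sum_{\ell\ge1}a_\ell2^{\ell-1}$, $\vec k=(a_1,a_2,\dots)$, $\kappa=\{\ell:a_\ell=1\}$; for $x\in[0,1)$, $\vec x$ its binary digits. For $\boldsymbol k\in\mathbb N_0^s$ with digit sets $\boldsymbol\kappa=(\kappa_1,\dots,\kappa_s)$, $\|\boldsymbol\kappa\|_1=\sum_j\sum_{\ell\in\kappa_j}\ell$; $\mathbb N_*^s=\mathbb N_0^s\setminus\{\boldsymbol0\}$, $Q_N=\{\boldsymbol k\in\mathbb N_*^s:\|\boldsymbol\kappa\|_1\le N\}$; $\hat f(\boldsymbol k)=\int f(\boldsymbol x)(-1)^{\sum_j\vec k_j^{\mathsf T}\vec x_j}\mathrm d\boldsymbol x$. $\oplus$ on $\mathbb N_0^s$ is componentwise bitwise XOR. $\lambda=3(\log2)^2/\pi^2$. Constants: $A_s,B_s>0$ are constants depending only on $s$ such that for all $N\ge1$ and $r\ge2$, if $\boldsymbol k_1,\dots,\boldsymbol k_r$ are i.i.d. uniform on $Q_N$ then $\Pr(\oplus_{i=1}^r\boldsymbol k_i\in Q_N)\le A_s^rN^{r/4}r^{-B_s\sqrt N}$ (such constants exist). Set $c_s=\frac14B_s\sqrt{\lambda/s}$ and $N_m=\sup\{N\in\mathbb N_0:|Q_N|\le c_sm2^m\}$. Randomization: random $C_j\in\{0,1\}^{\infty\times m}$ with all entries i.i.d. uniform on $\{0,1\}$ (complete random design), and digital shifts $\vec D_j\in\{0,1\}^\infty$ with i.i.d. uniform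 entries, independent of the $C_j$. $Z(\boldsymbol k)=\mathbf 1\{\sum_j\sum_{\ell\in\kappa_j}C_j(\ell,:)=\boldsymbol0\bmod2\}$ and $S(\boldsymbol k)=(-1)^{\sum_j\vec k_j^{\mathsf T}\vec D_j}$. $d_{TV}(X,Y)=\sup_{A\text{ Borel}}|\Pr(X\in A)-\Pr(Y\in A)|$. *)

theory Defs
  imports "HOL-Analysis.Analysis" "HOL-Probability.Probability"
begin

text \<open>Digit set kappa of k: positions l >= 1 with a_l = 1, where k = sum a_l 2^(l-1).\<close>
definition digits :: "nat \<Rightarrow> nat set" where
  "digits k = {l. 1 \<le> l \<and> bit k (l - 1)}"

definition knorm :: "('n::finite \<Rightarrow> nat) \<Rightarrow> nat" where
  "knorm k = (\<Sum>j\<in>UNIV. \<Sum>l\<in>digits (k j). l)"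

definition Qset :: "nat \<Rightarrow> ('n::finite \<Rightarrow> nat) set" where
  "Qset N = {k. k \<noteq> (\<lambda>_. 0) \<and> knorm k \<le> N}"

definition xdigit :: "real \<Rightarrow> nat \<Rightarrow> nat" where
  "xdigit x l = nat \<lfloor>2 ^ l * x\<rfloor> mod 2"

definition walsh :: "('n::finite \<Rightarrow> nat) \<Rightarrow> real^'n \<Rightarrow> real" where
  "walsh k x = (-1) ^ (\<Sum>j\<in>UNIV. \<Sum>l\<in>digits (k j). xdigit (x $ j) l)"

definition walsh_coeff :: "(real^'n \<Rightarrow> real) \<Rightarrow> ('n::finite \<Rightarrow> nat) \<Rightarrow> real" where
  "walsh_coeff f k = integral (cbox 0 One) (\<lambda>x. f x * walsh k x)"

definition xorsum :: "nat \<Rightarrow> (nat \<Rightarrow> 'n \<Rightarrow> nat) \<Rightarrow> ('n \<Rightarrow> nat)" where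
  "xorsum r ks = (\<lambda>j. fold (\<lambda>i acc. xor acc (ks i j)) [0..<r] 0)"

text \<open>The assumed property of the constants A_s, B_s: for N >= 1, r >= 2 and
  k_1..k_r i.i.d. uniform on Q_N, Pr(xor of the k_i in Q_N) <= A^r N^(r/4) r^(-B sqrt N).\<close>
definition xor_bound :: "'n::finite itself \<Rightarrow> real \<Rightarrow> real \<Rightarrow> bool" where
  "xor_bound _ A B \<longleftrightarrow> (\<forall>N r. 1 \<le> N \<longrightarrow> 2 \<le> r \<longrightarrow>
     measure_pmf.prob (pmf_of_set (PiE {..<r} (\<lambda>_. (Qset N :: ('n \<Rightarrow> nat) set))))
        {ks. xorsum r ks \<in> Qset N}
     \<le> A ^ r * real N powr (real r / 4) * real r powr (- B * sqrt (real N)))"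

definition lambda_const :: real where
  "lambda_const = 3 * (ln 2)^2 / pi^2"

definition c_const :: "'n::finite itself \<Rightarrow> real \<Rightarrow> real" where
  "c_const _ B = B / 4 * sqrt (lambda_const / real CARD('n))"

definition Nm :: "'n::finite itself \<Rightarrow> real \<Rightarrow> nat \<Rightarrow> nat" where
  "Nm _ c m = Sup {N. real (card (Qset N :: ('n \<Rightarrow> nat) set)) \<le> c * real m * 2 ^ m}"

fun Ck_on :: "nat \<Rightarrow> ('a::euclidean_space \<Rightarrow> real) \<Rightarrow> 'a set \<Rightarrow> bool" where
  "Ck_on 0 f U = continuous_on U f"
| "Ck_on (Suc k) f U = (f differentiable_on U \<and>
      (\<forall>i\<in>Basis. Ck_on k (\<lambda>x. frechet_derivative f (at x) i) U))"

definition Cinf_on :: "'a::euclidean_space set \<Rightarrow> ('a \<Rightarrow> real) \<Rightarrow> bool" where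
  "Cinf_on S f \<longleftrightarrow> (\<exists>U. open U \<and> S \<subseteq> U \<and> (\<forall>k. Ck_on k f U))"

text \<open>Generating matrices C_j: entries C j l c for rows l in {1..N}, columns c < m
  (rows l > N never enter the sums over Q_N; their values are irrelevant).\<close>
definition Cspace :: "nat \<Rightarrow> nat \<Rightarrow> ('n::finite \<Rightarrow> nat \<Rightarrow> nat \<Rightarrow> bool) set" where
  "Cspace N m = {C. \<forall>j l c. C j l c \<longrightarrow> (1 \<le> l \<and> l \<le> N \<and> c < m)}"

definition Dspace :: "nat \<Rightarrow> ('n::finite \<Rightarrow> nat \<Rightarrow> bool) set" where
  "Dspace N = {D. \<forall>j l. D j l \<longrightarrow> (1 \<le> l \<and> l \<le> N)}"

definition Sspace :: "nat \<Rightarrow> (('n::finite \<Rightarrow> nat) \<Rightarrow> real) set" where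
  "Sspace N = PiE (Qset N) (\<lambda>_. {-1, 1})"

definition Omega :: "nat \<Rightarrow> nat \<Rightarrow>
    (('n::finite \<Rightarrow> nat \<Rightarrow> nat \<Rightarrow> bool) \<times> ('n \<Rightarrow> nat \<Rightarrow> bool) \<times> (('n \<Rightarrow> nat) \<Rightarrow> real)) pmf" where
  "Omega N m = pmf_of_set (Cspace N m \<times> Dspace N \<times> Sspace N)"

definition Zk :: "nat \<Rightarrow> ('n::finite \<Rightarrow> nat \<Rightarrow> nat \<Rightarrow> bool) \<Rightarrow> ('n \<Rightarrow> nat) \<Rightarrow> real" where
  "Zk m C k = of_bool (\<forall>c<m. even (\<Sum>j\<in>UNIV. \<Sum>l\<in>digits (k j). (of_bool (C j l c) :: nat)))"

definition Sk :: "('n::finite \<Rightarrow> nat \<Rightarrow> bool) \<Rightarrow> ('n \<Rightarrow> nat) \<Rightarrow> real" where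
  "Sk D k = (-1) ^ (\<Sum>j\<in>UNIV. \<Sum>l\<in>digits (k j). (of_bool (D j l) :: nat))"

definition SUM1 :: "(real^'n \<Rightarrow> real) \<Rightarrow> nat \<Rightarrow> nat \<Rightarrow>
    (('n::finite \<Rightarrow> nat \<Rightarrow> nat \<Rightarrow> bool) \<times> ('n \<Rightarrow> nat \<Rightarrow> bool) \<times> (('n \<Rightarrow> nat) \<Rightarrow> real)) \<Rightarrow> real" where
  "SUM1 f N m \<omega> = (case \<omega> of (C, D, S') \<Rightarrow>
      \<Sum>k\<in>Qset N. Zk m C k * Sk D k * walsh_coeff f k)"

definition SUM1' :: "(real^'n \<Rightarrow> real) \<Rightarrow> nat \<Rightarrow> nat \<Rightarrow>
    (('n::finite \<Rightarrow> nat \<Rightarrow> nat \<Rightarrow> bool) \<times> ('n \<Rightarrow> nat \<Rightarrow> bool) \<times> (('n \<Rightarrow> nat) \<Rightarrow> real)) \<Rightarrow> real" where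
  "SUM1' f N m \<omega> = (case \<omega> of (C, D, S') \<Rightarrow>
      \<Sum>k\<in>Qset N. Zk m C k * S' k * walsh_coeff f k)"

definition dTV :: "real pmf \<Rightarrow> real pmf \<Rightarrow> real" where
  "dTV p q = (SUP A\<in>sets borel. \<bar>measure_pmf.prob p A - measure_pmf.prob q A\<bar>)"

end

(*
  Given the generating matrices C, both sums run over the dual set K(C) = {k \<in> Q_N. Z(k) = 1}.
  If the digit vectors of K(C) are linearly independent over GF(2), every nonempty product of the
  signs S(k), k \<in> K(C), is a nontrivial character of the digital shift and averages to zero, so
  these signs are i.i.d. uniform like the S'(k): given C, SUM_1 and SUM'_1 have the same law, and
  d_TV is at most the probability that K(C) is dependent.  A dependent K(C) is either large,
  |K(C)| > 2cm, which has probability at most 1/(cm) by Chebyshev (E |K(C)| = |Q_N| / 2^m \<le> cm, and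
  the variance is at most the mean), or it contains a circuit: an independent set T, 2 \<le> |T| \<le> 2cm,
  whose XOR lies in Q_N.  A given T survives with probability 2^(-|T| m), and the number of such T
  of size q is at most |Q_N|^q times the assumed bound on the XOR probability.  Finally
  ln |Q_N| \<le> pi sqrt (s N / 3) gives N_m \<ge> lambda m^2 / s - 1, so that B sqrt N_m \<ge> 4cm - 1 and
  each circuit term is O(m^3 2^(-4cm)).
*)
theory Submission
  imports Defs "HOL-Real_Asymp.Real_Asymp"
begin

type_synonym 'n freq = "'n \<Rightarrow> nat"
type_synonym 'n gen_matrix = "'n \<Rightarrow> nat \<Rightarrow> nat \<Rightarrow> bool"
type_synonym 'n digit_shift = "'n \<Rightarrow> nat \<Rightarrow> bool"

section \<open>Signs and their averages\<close>

lemma card_filter_remove: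
  assumes "finite P" and "p0 \<in> P"
  shows "card {p\<in>P. x p} = card {p\<in>P - {p0}. x p} + of_bool (x p0)"
proof (cases "x p0")
  case True
  then have "{p\<in>P. x p} = insert p0 {p\<in>P - {p0}. x p}" using assms(2) by auto
  then show ?thesis using assms(1) True by simp
next
  case False
  then have "{p\<in>P. x p} = {p\<in>P - {p0}. x p}" by auto
  then show ?thesis using False by simp
qed

definition parity_sign :: "'p set \<Rightarrow> ('p \<Rightarrow> bool) \<Rightarrow> real" where
  "parity_sign P x = (-1) ^ card {p\<in>P. x p}"

lemma parity_sign_cases: "parity_sign P x = -1 \<or> parity_sign P x = 1"
  by (simp add: parity_sign_def minus_one_power_iff)

lemma parity_sign_eq_1_iff: "parity_sign P x = 1 \<longleftrightarrow> even (card {p\<in>P. x p})"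
  by (simp add: parity_sign_def minus_one_power_iff)

lemma parity_sign_flip:
  assumes "finite P"
  shows "parity_sign P (x(p0 := \<not> x p0)) = (if p0 \<in> P then - parity_sign P x else parity_sign P x)"
proof (cases "p0 \<in> P")
  case True
  have "{p \<in> P - {p0}. (x(p0 := \<not> x p0)) p} = {p \<in> P - {p0}. x p}" by auto
  then show ?thesis
    using True card_filter_remove[OF assms True, of x] card_filter_remove[OF assms True, of "x(p0 := \<not> x p0)"]
    by (cases "x p0") (simp_all add: parity_sign_def)
next
  case False
  then have "{p\<in>P. (x(p0 := \<not> x p0)) p} = {p\<in>P. x p}" by auto
  then show ?thesis using False by (simp add: parity_sign_def)
qed

lemma sum_prod_signs_eq_0:
  fixes \<sigma> :: "'u \<Rightarrow> 'x \<Rightarrow> real"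
  assumes X: "finite X" and U: "finite U"
    and \<phi>: "\<And>x. x \<in> X \<Longrightarrow> \<phi> x \<in> X" "\<And>x. x \<in> X \<Longrightarrow> \<phi> (\<phi> x) = x"
    and flip: "\<And>u x. u \<in> U \<Longrightarrow> \<sigma> u (\<phi> x) = (if u \<in> W then - \<sigma> u x else \<sigma> u x)"
    and odd: "odd (card (U \<inter> W))"
  shows "(\<Sum>x\<in>X. \<Prod>u\<in>U. \<sigma> u x) = 0"
proof -
  have neg: "(\<Prod>u\<in>U. \<sigma> u (\<phi> x)) = - (\<Prod>u\<in>U. \<sigma> u x)" for x
  proof -
    have "(\<Prod>u\<in>U. \<sigma> u (\<phi> x)) = (\<Prod>u\<in>U. if u \<in> W then - \<sigma> u x else \<sigma> u x)"
      by (rule prod.cong) (simp_all add: flip)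
    also have "\<dots> = (\<Prod>u\<in>U \<inter> W. - \<sigma> u x) * (\<Prod>u\<in>U - W. \<sigma> u x)"
      using U by (simp add: prod.If_cases Diff_eq)
    also have "\<dots> = - (\<Prod>u\<in>U. \<sigma> u x)"
      using odd prod.Int_Diff[OF U, of "\<lambda>u. \<sigma> u x" W] by (simp add: prod_uminus)
    finally show ?thesis .
  qed
  have "bij_betw \<phi> X X"
    by (rule bij_betw_byWitness[of _ \<phi>]) (use \<phi> in auto)
  then have "(\<Sum>x\<in>X. \<Prod>u\<in>U. \<sigma> u x) = (\<Sum>x\<in>X. \<Prod>u\<in>U. \<sigma> u (\<phi> x))"
    using sum.reindex_bij_betw[of \<phi> X X "\<lambda>x. \<Prod>u\<in>U. \<sigma> u x"] by simp
  also have "\<dots> = - (\<Sum>x\<in>X. \<Prod>u\<in>U. \<sigma> u x)"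
    by (simp add: neg sum_negf)
  finally show ?thesis by simp
qed

text \<open>Expand the indicator of the sign pattern v as the product of the factors (1 + Y x k v k) / 2.\<close>
lemma card_sign_pattern:
  fixes Y :: "'x \<Rightarrow> 'k \<Rightarrow> real"
  assumes X: "finite X" and K: "finite K"
    and pm: "\<And>x k. x \<in> X \<Longrightarrow> k \<in> K \<Longrightarrow> Y x k = -1 \<or> Y x k = 1"
    and balanced: "\<And>U. U \<subseteq> K \<Longrightarrow> U \<noteq> {} \<Longrightarrow> (\<Sum>x\<in>X. \<Prod>k\<in>U. Y x k) = 0"
    and v: "\<And>k. k \<in> K \<Longrightarrow> v k = -1 \<or> v k = 1"
  shows "real (card {x\<in>X. \<forall>k\<in>K. Y x k = v k}) * 2 ^ card K = real (card X)"
proof -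
  have ind: "of_bool (\<forall>k\<in>K. Y x k = v k) = (\<Prod>k\<in>K. (1 + Y x k * v k) / 2)" if "x \<in> X" for x
  proof (cases "\<forall>k\<in>K. Y x k = v k")
    case True
    then have "\<forall>k\<in>K. (1 + Y x k * v k) / 2 = 1" using v by fastforce
    then show ?thesis using True by simp
  next
    case False
    then obtain k where "k \<in> K" "Y x k \<noteq> v k" by auto
    then have "(1 + Y x k * v k) / 2 = 0" using pm[OF that] v by fastforce
    then have "(\<Prod>k\<in>K. (1 + Y x k * v k) / 2) = 0"
      using \<open>k \<in> K\<close> K by (intro prod_zero) auto
    then show ?thesis using False by simp
  qed
  have "real (card {x\<in>X. \<forall>k\<in>K. Y x k = v k}) = (\<Sum>x\<in>X. of_bool (\<forall>k\<in>K. Y x k = v k))"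
    using X by (simp add: Int_def)
  also have "\<dots> = (\<Sum>x\<in>X. (\<Prod>k\<in>K. (1 + Y x k * v k)) / 2 ^ card K)"
    using ind by (intro sum.cong refl) (simp add: prod_dividef)
  also have "\<dots> = (\<Sum>x\<in>X. \<Sum>U\<in>Pow K. \<Prod>k\<in>U. Y x k * v k) / 2 ^ card K"
    by (simp add: sum_divide_distrib prod_add[OF K] add.commute[of 1])
  also have "(\<Sum>x\<in>X. \<Sum>U\<in>Pow K. \<Prod>k\<in>U. Y x k * v k)
      = (\<Sum>U\<in>Pow K. (\<Prod>k\<in>U. v k) * (\<Sum>x\<in>X. \<Prod>k\<in>U. Y x k))"
    by (subst sum.swap) (simp add: prod.distrib sum_distrib_left mult.commute)
  also have "\<dots> = (\<Sum>U\<in>{{}}. (\<Prod>k\<in>U. v k) * (\<Sum>x\<in>X. \<Prod>k\<in>U. Y x k))"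
    using K by (intro sum.mono_neutral_right) (auto simp: balanced)
  finally show ?thesis by simp
qed

lemma card_sign_event:
  fixes Y :: "'x \<Rightarrow> 'k \<Rightarrow> real"
  assumes X: "finite X" and K: "finite K"
    and pm: "\<And>x k. x \<in> X \<Longrightarrow> k \<in> K \<Longrightarrow> Y x k = -1 \<or> Y x k = 1"
    and balanced: "\<And>U. U \<subseteq> K \<Longrightarrow> U \<noteq> {} \<Longrightarrow> (\<Sum>x\<in>X. \<Prod>k\<in>U. Y x k) = 0"
  shows "real (card {x\<in>X. g (restrict (Y x) K)}) * 2 ^ card K
       = real (card X) * real (card {v \<in> PiE K (\<lambda>_. {-1, 1}). g v})"
proof -
  define V where "V = {v \<in> PiE K (\<lambda>_. {-1::real, 1}). g v}"
  define fiber where "fiber v = {x\<in>X. \<forall>k\<in>K. Y x k = v k}" for v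
  have "finite (PiE K (\<lambda>_. {-1::real, 1}))" using K by (intro finite_PiE) auto
  then have finV: "finite V" unfolding V_def by (rule rev_finite_subset) auto
  have restrict_eq: "restrict (Y x) K = v" if "v \<in> V" "x \<in> fiber v" for x v
    using that by (auto simp: V_def fiber_def fun_eq_iff PiE_def extensional_def)
  have eq: "{x\<in>X. g (restrict (Y x) K)} = (\<Union>v\<in>V. fiber v)"
  proof (intro equalityI subsetI)
    fix x
    assume x: "x \<in> {x\<in>X. g (restrict (Y x) K)}"
    then have "restrict (Y x) K \<in> V" using pm by (auto simp: V_def)
    moreover have "x \<in> fiber (restrict (Y x) K)" using x by (simp add: fiber_def)
    ultimately show "x \<in> (\<Union>v\<in>V. fiber v)" by blast
  next
    fix x
    assume "x \<in> (\<Union>v\<in>V. fiber v)"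
    then obtain v where "v \<in> V" "x \<in> fiber v" by blast
    then show "x \<in> {x\<in>X. g (restrict (Y x) K)}"
      using restrict_eq[of v x] by (auto simp: V_def fiber_def)
  qed
  have disj: "fiber v \<inter> fiber w = {}" if "v \<in> V" "w \<in> V" "v \<noteq> w" for v w
  proof -
    have "\<exists>k\<in>K. v k \<noteq> w k"
      using that by (auto simp: V_def intro: PiE_ext)
    then show ?thesis by (auto simp: fiber_def)
  qed
  have "real (card {x\<in>X. g (restrict (Y x) K)}) * 2 ^ card K = (\<Sum>v\<in>V. real (card (fiber v)) * 2 ^ card K)"
    unfolding eq using X finV disj
    by (subst card_UN_disjoint) (auto simp: fiber_def sum_distrib_right)
  also have "\<dots> = (\<Sum>v\<in>V. real (card X))"
    using card_sign_pattern[OF X K pm balanced] by (intro sum.cong refl) (auto simp: V_def fiber_def)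
  finally show ?thesis by (simp add: V_def)
qed

section \<open>Binary digits and the sets Q_N\<close>

lemma digits_ge_1: "l \<in> digits a \<Longrightarrow> 1 \<le> l"
  by (simp add: digits_def)

lemma digits_le_exp:
  assumes "a < 2 ^ M" and "l \<in> digits a"
  shows "l \<le> M"
proof -
  have "bit (take_bit M a) (l - 1)"
    using assms by (simp add: digits_def take_bit_nat_eq_self)
  then show ?thesis
    using assms(2) by (auto simp: bit_take_bit_iff digits_def)
qed

lemma finite_digits [simp]: "finite (digits a)"
  by (rule finite_subset[of _ "{..a}"]) (auto dest: digits_le_exp[OF less_exp])

lemma digits_eq_iff: "digits a = digits b \<longleftrightarrow> a = b"
proof
  assume eq: "digits a = digits b"
  have "bit a n = bit b n" for n
  proof -
    have "Suc n \<in> digits a \<longleftrightarrow> Suc n \<in> digits b" using eq by simp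
    then show ?thesis by (simp add: digits_def)
  qed
  then show "a = b" by (simp add: bit_eq_iff)
qed simp

lemma digits_0 [simp]: "digits 0 = {}"
  by (simp add: digits_def)

lemma digits_eq_empty_iff: "digits a = {} \<longleftrightarrow> a = 0"
  using digits_eq_iff[of a 0] by simp

lemma nonzero_obtains_digit:
  assumes "(k::'n::finite freq) \<noteq> (\<lambda>_. 0)"
  obtains j l where "l \<in> digits (k j)"
  using assms digits_eq_empty_iff by fastforce

lemma digit_le_knorm:
  assumes "l \<in> digits (k j)"
  shows "l \<le> knorm k"
proof -
  have "l \<le> (\<Sum>l\<in>digits (k j). l)"
    using assms by (intro member_le_sum) auto
  also have "\<dots> \<le> knorm k"
    unfolding knorm_def using member_le_sum[of j UNIV "\<lambda>j. \<Sum>l\<in>digits (k j). l"] by simp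
  finally show ?thesis .
qed

lemma Qset_digit_le: "k \<in> Qset N \<Longrightarrow> l \<in> digits (k j) \<Longrightarrow> l \<le> N"
  using digit_le_knorm[of l k j] by (auto simp: Qset_def)

lemma Qset_less_exp:
  assumes "k \<in> Qset N"
  shows "k j < 2 ^ N"
proof -
  have "bit (take_bit N (k j)) n = bit (k j) n" for n
    using Qset_digit_le[OF assms, of "Suc n" j] by (auto simp: bit_take_bit_iff digits_def)
  then have "take_bit N (k j) = k j" by (simp add: bit_eq_iff)
  then show ?thesis by (metis take_bit_nat_less_exp)
qed

lemma finite_Qset [simp]: "finite (Qset N :: 'n::finite freq set)"
proof (rule finite_subset)
  show "Qset N \<subseteq> PiE UNIV (\<lambda>_. {..<(2::nat) ^ N})"
    using Qset_less_exp by (auto simp: PiE_UNIV_domain)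
qed (intro finite_PiE; simp)

lemma Qset_mono: "N \<le> N' \<Longrightarrow> Qset N \<subseteq> Qset N'"
  by (auto simp: Qset_def)

lemma Qset_0 [simp]: "Qset 0 = {}"
proof -
  have "k \<notin> Qset 0" for k :: "'n::finite freq"
  proof
    assume k: "k \<in> Qset 0"
    then obtain j l where "l \<in> digits (k j)"
      by (auto simp: Qset_def elim: nonzero_obtains_digit)
    then show False using Qset_digit_le[OF k] digits_ge_1 by fastforce
  qed
  then show ?thesis by auto
qed

lemma card_Qset_square_ge: "real (card (Qset (M * M) :: 'n::finite freq set)) \<ge> 2 ^ M - 1"
proof -
  fix j0 :: 'n
  define e where "e = (\<lambda>a::nat. (\<lambda>j::'n. if j = j0 then a else 0))"
  have inj: "inj_on e {1..<2 ^ M}"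
    unfolding e_def by (auto simp: inj_on_def fun_eq_iff)
  have "e a \<in> Qset (M * M)" if a: "1 \<le> a" "a < 2 ^ M" for a
  proof -
    have "knorm (e a) = (\<Sum>l\<in>digits a. l)"
      unfolding knorm_def by (subst sum.remove[of _ j0]) (auto simp: e_def)
    also have "\<dots> \<le> card (digits a) * M"
      using sum_bounded_above[of "digits a" "\<lambda>l. l" M] digits_le_exp[OF a(2)] by simp
    also have "card (digits a) \<le> card {1..M}"
      using digits_le_exp[OF a(2)] digits_ge_1 by (intro card_mono) auto
    finally have "knorm (e a) \<le> M * M" by simp
    moreover have "e a \<noteq> (\<lambda>_. 0)" using a by (auto simp: e_def fun_eq_iff)
    ultimately show ?thesis by (simp add: Qset_def)
  qed
  then have "card {1..<(2::nat) ^ M} \<le> card (Qset (M * M) :: 'n freq set)"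
    by (intro card_inj_on_le[OF inj]) auto
  moreover have "real (card {1..<(2::nat) ^ M}) = 2 ^ M - 1"
    by (simp add: of_nat_diff)
  ultimately show ?thesis by linarith
qed

lemma Qset_nonempty:
  assumes "N \<ge> 1"
  shows "Qset N \<noteq> ({} :: 'n::finite freq set)"
proof -
  have "real (card (Qset (1 * 1) :: 'n freq set)) \<ge> 2 ^ 1 - 1"
    by (rule card_Qset_square_ge)
  then have "Qset 1 \<noteq> ({} :: 'n freq set)" by auto
  then show ?thesis using Qset_mono[OF assms] by blast
qed

definition digit_pairs :: "'n::finite freq \<Rightarrow> ('n \<times> nat) set" where
  "digit_pairs k = Sigma UNIV (\<lambda>j. digits (k j))"

lemma finite_digit_pairs [simp]: "finite (digit_pairs k)"
  by (simp add: digit_pairs_def)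

lemma mem_digit_pairs [simp]: "(j, l) \<in> digit_pairs k \<longleftrightarrow> l \<in> digits (k j)"
  by (simp add: digit_pairs_def)

lemma sum_digit_pairs: "(\<Sum>j\<in>UNIV. \<Sum>l\<in>digits (k j). f j l) = (\<Sum>(j, l)\<in>digit_pairs k. f j l)"
  unfolding digit_pairs_def by (subst sum.Sigma) auto

lemma inj_digit_pairs: "inj digit_pairs"
proof (rule injI)
  fix k k'
  assume "digit_pairs k = digit_pairs k'"
  then have "digits (k j) = digits (k' j)" for j
    by (auto simp: digit_pairs_def set_eq_iff)
  then show "k = k'" by (simp add: digits_eq_iff fun_eq_iff)
qed

section \<open>The randomization\<close>

lemma Sk_eq_parity_sign: "Sk D k = parity_sign (digit_pairs k) (\<lambda>(j, l). D j l)"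
  unfolding Sk_def parity_sign_def sum_digit_pairs
  by (simp add: case_prod_unfold Int_def)

definition column_sign :: "nat \<Rightarrow> 'n gen_matrix \<Rightarrow> 'n::finite freq \<Rightarrow> real" where
  "column_sign c C k = parity_sign (digit_pairs k) (\<lambda>(j, l). C j l c)"

lemma Zk_eq_1_iff: "Zk m C k = 1 \<longleftrightarrow> (\<forall>c<m. column_sign c C k = 1)"
  unfolding Zk_def column_sign_def parity_sign_eq_1_iff sum_digit_pairs
  by (simp add: case_prod_unfold Int_def)

definition flip_D :: "'n \<Rightarrow> nat \<Rightarrow> 'n digit_shift \<Rightarrow> 'n digit_shift" where
  "flip_D j0 l0 D = (\<lambda>j l. if j = j0 \<and> l = l0 then \<not> D j l else D j l)"

definition flip_C :: "'n \<Rightarrow> nat \<Rightarrow> nat \<Rightarrow> 'n gen_matrix \<Rightarrow> 'n gen_matrix" where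
  "flip_C j0 l0 c0 C = (\<lambda>j l c. if j = j0 \<and> l = l0 \<and> c = c0 then \<not> C j l c else C j l c)"

lemma Sk_flip_D: "Sk (flip_D j0 l0 D) k = (if l0 \<in> digits (k j0) then - Sk D k else Sk D k)"
proof -
  have "(\<lambda>(j, l). flip_D j0 l0 D j l) = (\<lambda>(j, l). D j l)((j0, l0) := \<not> D j0 l0)"
    by (auto simp: flip_D_def fun_eq_iff)
  then show ?thesis
    unfolding Sk_eq_parity_sign
    using parity_sign_flip[of "digit_pairs k" "\<lambda>(j, l). D j l" "(j0, l0)"] by simp
qed

lemma column_sign_flip_C:
  "column_sign c (flip_C j0 l0 c0 C) k
     = (if c = c0 \<and> l0 \<in> digits (k j0) then - column_sign c C k else column_sign c C k)"
proof (cases "c = c0")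
  case True
  have "(\<lambda>(j, l). flip_C j0 l0 c0 C j l c) = (\<lambda>(j, l). C j l c)((j0, l0) := \<not> C j0 l0 c)"
    using True by (auto simp: flip_C_def fun_eq_iff)
  then show ?thesis
    unfolding column_sign_def
    using True parity_sign_flip[of "digit_pairs k" "\<lambda>(j, l). C j l c" "(j0, l0)"] by simp
next
  case False
  then show ?thesis by (simp add: column_sign_def flip_C_def case_prod_unfold)
qed

lemma finite_Cspace: "finite (Cspace N m :: 'n::finite gen_matrix set)"
proof (rule finite_subset)
  let ?g = "\<lambda>S::('n \<times> nat \<times> nat) set. (\<lambda>j l c. (j, l, c) \<in> S)"
  show "Cspace N m \<subseteq> ?g ` Pow (UNIV \<times> {1..N} \<times> {..<m})"
  proof
    fix C :: "'n gen_matrix"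
    assume "C \<in> Cspace N m"
    then have "{(j, l, c). C j l c} \<in> Pow (UNIV \<times> {1..N} \<times> {..<m})" by (auto simp: Cspace_def)
    then show "C \<in> ?g ` Pow (UNIV \<times> {1..N} \<times> {..<m})" by (rule rev_image_eqI) simp
  qed
qed auto

lemma finite_Dspace: "finite (Dspace N :: 'n::finite digit_shift set)"
proof (rule finite_subset)
  let ?g = "\<lambda>S::('n \<times> nat) set. (\<lambda>j l. (j, l) \<in> S)"
  show "Dspace N \<subseteq> ?g ` Pow (UNIV \<times> {1..N})"
  proof
    fix D :: "'n digit_shift"
    assume "D \<in> Dspace N"
    then have "{(j, l). D j l} \<in> Pow (UNIV \<times> {1..N})" by (auto simp: Dspace_def)
    then show "D \<in> ?g ` Pow (UNIV \<times> {1..N})" by (rule rev_image_eqI) simp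
  qed
qed auto

lemma finite_Sspace: "finite (Sspace N :: ('n::finite freq \<Rightarrow> real) set)"
  unfolding Sspace_def by (intro finite_PiE) auto

lemma card_Cspace_pos: "card (Cspace N m :: 'n::finite gen_matrix set) > 0"
proof -
  have "(\<lambda>_ _ _. False) \<in> (Cspace N m :: 'n gen_matrix set)" by (simp add: Cspace_def)
  then show ?thesis using finite_Cspace card_gt_0_iff by blast
qed

lemma card_Dspace_pos: "card (Dspace N :: 'n::finite digit_shift set) > 0"
proof -
  have "(\<lambda>_ _. False) \<in> (Dspace N :: 'n digit_shift set)" by (simp add: Dspace_def)
  then show ?thesis using finite_Dspace card_gt_0_iff by blast
qed

lemma card_Sspace_pos: "card (Sspace N :: ('n::finite freq \<Rightarrow> real) set) > 0"
proof -
  have "(\<lambda>k\<in>Qset N. 1) \<in> (Sspace N :: ('n freq \<Rightarrow> real) set)" by (simp add: Sspace_def)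
  then show ?thesis using finite_Sspace card_gt_0_iff by blast
qed

definition dual_Qset :: "nat \<Rightarrow> nat \<Rightarrow> 'n gen_matrix \<Rightarrow> 'n::finite freq set" where
  "dual_Qset N m C = {k\<in>Qset N. Zk m C k = 1}"

lemma Zk_cases: "Zk m C k = 0 \<or> Zk m C k = 1"
  unfolding Zk_def of_bool_def by auto

lemma Zk_eq_indicator: "Zk m C k = of_bool (Zk m C k = 1)"
  using Zk_cases[of m C k] by auto

lemma Zk_mult_self: "Zk m C k * Zk m C k = Zk m C k"
  using Zk_cases[of m C k] by auto

lemma card_dual_Qset: "real (card (dual_Qset N m C)) = (\<Sum>k\<in>Qset N. Zk m C k)"
proof -
  have "(\<Sum>k\<in>Qset N. Zk m C k) = (\<Sum>k\<in>Qset N. of_bool (Zk m C k = 1))"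
    by (rule sum.cong[OF refl Zk_eq_indicator])
  then show ?thesis by (simp add: dual_Qset_def Int_def)
qed

lemma sum_Zk_mult: "(\<Sum>k\<in>Qset N. Zk m C k * h k) = (\<Sum>k\<in>dual_Qset N m C. h k)"
proof -
  have "(\<Sum>k\<in>Qset N. Zk m C k * h k) = (\<Sum>k\<in>Qset N. if Zk m C k = 1 then h k else 0)"
    by (rule sum.cong[OF refl]) (use Zk_cases in auto)
  also have "\<dots> = (\<Sum>k\<in>dual_Qset N m C. h k)"
    unfolding dual_Qset_def by (rule sum.inter_filter[symmetric]) simp
  finally show ?thesis .
qed

lemma SUM1_eq: "SUM1 f N m (C, D, S) = (\<Sum>k\<in>dual_Qset N m C. Sk D k * walsh_coeff f k)"
  unfolding SUM1_def by (simp add: mult.assoc sum_Zk_mult)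

lemma SUM1'_eq: "SUM1' f N m (C, D, S) = (\<Sum>k\<in>dual_Qset N m C. S k * walsh_coeff f k)"
  unfolding SUM1'_def by (simp add: mult.assoc sum_Zk_mult)

section \<open>Independence over GF(2)\<close>

text \<open>No nonempty subset of T has XOR zero: the digit vectors of T are linearly independent over GF(2).\<close>
definition xor_independent :: "'n::finite freq set \<Rightarrow> bool" where
  "xor_independent T \<longleftrightarrow> (\<forall>U\<subseteq>T. U \<noteq> {} \<longrightarrow> (\<exists>j l. odd (card {k\<in>U. l \<in> digits (k j)})))"

lemma xor_independent_obtains_odd_digit:
  assumes "xor_independent T" "T \<subseteq> Qset N" "U \<subseteq> T" "U \<noteq> {}"
  obtains j l where "odd (card {k\<in>U. l \<in> digits (k j)})" "1 \<le> l" "l \<le> N"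
proof -
  obtain j l where odd: "odd (card {k\<in>U. l \<in> digits (k j)})"
    using assms(1,3,4) unfolding xor_independent_def by blast
  then have "{k\<in>U. l \<in> digits (k j)} \<noteq> {}"
    by (intro notI) simp
  then obtain k where k: "k \<in> U" "l \<in> digits (k j)" by blast
  have "1 \<le> l" using k(2) by (rule digits_ge_1)
  moreover have "l \<le> N" using k assms(2,3) by (intro Qset_digit_le[of k]) auto
  ultimately show ?thesis using odd that by simp
qed

lemma sum_prod_Sk_eq_0:
  assumes "xor_independent K" "K \<subseteq> Qset N" "U \<subseteq> K" "U \<noteq> {}"
  shows "(\<Sum>D\<in>Dspace N. \<Prod>k\<in>U. Sk D k) = 0"
proof -
  obtain j0 l0 where odd: "odd (card {k\<in>U. l0 \<in> digits (k j0)})" and l0: "1 \<le> l0" "l0 \<le> N"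
    using xor_independent_obtains_odd_digit[OF assms] .
  define W where "W = {k. l0 \<in> digits (k j0)}"
  have "U \<inter> W = {k\<in>U. l0 \<in> digits (k j0)}" by (auto simp: W_def)
  show ?thesis
  proof (rule sum_prod_signs_eq_0[where \<phi>="flip_D j0 l0" and W=W])
    show "finite (Dspace N)" by (rule finite_Dspace)
    show "finite U" using finite_subset[OF subset_trans[OF assms(3,2)] finite_Qset] .
    show "flip_D j0 l0 D \<in> Dspace N" if "D \<in> Dspace N" for D
      using that l0 by (auto simp: Dspace_def flip_D_def)
    show "flip_D j0 l0 (flip_D j0 l0 D) = D" for D
      by (simp add: flip_D_def fun_eq_iff)
    show "Sk (flip_D j0 l0 D) k = (if k \<in> W then - Sk D k else Sk D k)" for k D
      by (simp add: Sk_flip_D W_def)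
    show "odd (card (U \<inter> W))" using odd \<open>U \<inter> W = _\<close> by simp
  qed
qed

lemma sum_prod_column_sign_eq_0:
  fixes T :: "'n::finite freq set"
  assumes "xor_independent T" "T \<subseteq> Qset N" "U \<subseteq> T \<times> {..<m}" "U \<noteq> {}"
  shows "(\<Sum>C\<in>Cspace N m. \<Prod>u\<in>U. column_sign (snd u) C (fst u)) = 0"
proof -
  obtain k1 c0 where kc: "(k1, c0) \<in> U" using assms(4) by auto
  define U0 where "U0 = {k. (k, c0) \<in> U}"
  have "U0 \<subseteq> T" using assms(3) by (auto simp: U0_def)
  moreover have "U0 \<noteq> {}" using kc by (auto simp: U0_def)
  ultimately obtain j0 l0 where odd: "odd (card {k\<in>U0. l0 \<in> digits (k j0)})"
    and l0: "1 \<le> l0" "l0 \<le> N"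
    using xor_independent_obtains_odd_digit[OF assms(1,2)] by blast
  have c0: "c0 < m" using kc assms(3) by auto
  define W where "W = {u. snd u = c0 \<and> l0 \<in> digits (fst u j0)}"
  have "U \<inter> W = (\<lambda>k. (k, c0)) ` {k\<in>U0. l0 \<in> digits (k j0)}"
    by (auto simp: W_def U0_def)
  moreover have "inj (\<lambda>k::'n freq. (k, c0))" by (rule injI) simp
  ultimately have card_UW: "card (U \<inter> W) = card {k\<in>U0. l0 \<in> digits (k j0)}"
    by (simp add: card_image inj_on_subset)
  show ?thesis
  proof (rule sum_prod_signs_eq_0[where \<phi>="flip_C j0 l0 c0" and W=W])
    show "finite (Cspace N m)" by (rule finite_Cspace)
    have "finite (T \<times> {..<m})" using finite_subset[OF assms(2) finite_Qset] by simp
    then show "finite U" by (rule finite_subset[OF assms(3)])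
    show "flip_C j0 l0 c0 C \<in> Cspace N m" if "C \<in> Cspace N m" for C
      using that l0 c0 by (auto simp: Cspace_def flip_C_def)
    show "flip_C j0 l0 c0 (flip_C j0 l0 c0 C) = C" for C
      by (simp add: flip_C_def fun_eq_iff)
    show "column_sign (snd u) (flip_C j0 l0 c0 C) (fst u)
        = (if u \<in> W then - column_sign (snd u) C (fst u) else column_sign (snd u) C (fst u))" for u C
      by (simp add: column_sign_flip_C W_def)
    show "odd (card (U \<inter> W))" using odd card_UW by simp
  qed
qed

lemma sum_prod_Sspace_eq_0:
  assumes "U \<subseteq> Qset N" "U \<noteq> {}"
  shows "(\<Sum>S\<in>Sspace N. \<Prod>k\<in>U. S k) = 0"
proof -
  obtain k0 where k0: "k0 \<in> U" using assms(2) by auto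
  show ?thesis
  proof (rule sum_prod_signs_eq_0[where \<phi>="\<lambda>S. S(k0 := - S k0)" and W="{k0}"])
    show "finite (Sspace N)" by (rule finite_Sspace)
    show "finite U" using finite_subset[OF assms(1) finite_Qset] .
    show "S(k0 := - S k0) \<in> Sspace N" if "S \<in> Sspace N" for S
      using that k0 assms(1) by (auto simp: Sspace_def PiE_def Pi_def extensional_def)
    show "odd (card (U \<inter> {k0}))" using k0 by simp
  qed simp_all
qed

lemma card_Zk_all_eq_1:
  fixes T :: "'n::finite freq set"
  assumes "xor_independent T" "T \<subseteq> Qset N"
  shows "real (card {C\<in>Cspace N m. \<forall>k\<in>T. Zk m C k = 1}) * 2 ^ (card T * m)
       = real (card (Cspace N m :: 'n::finite gen_matrix set))"
proof -
  define K where "K = T \<times> {..<m}"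
  have "finite K" using finite_subset[OF assms(2) finite_Qset] by (simp add: K_def)
  define one :: "'n freq \<times> nat \<Rightarrow> real" where "one = (\<lambda>_. 1)"
  have "real (card {C\<in>Cspace N m. \<forall>u\<in>K. column_sign (snd u) C (fst u) = one u}) * 2 ^ card K
      = real (card (Cspace N m :: 'n gen_matrix set))"
  proof (rule card_sign_pattern)
    show "finite (Cspace N m :: 'n gen_matrix set)" by (rule finite_Cspace)
    show "column_sign (snd u) C (fst u) = -1 \<or> column_sign (snd u) C (fst u) = 1" for u C
      by (simp add: column_sign_def parity_sign_cases)
    show "(\<Sum>C\<in>Cspace N m. \<Prod>u\<in>U. column_sign (snd u) C (fst u)) = 0" if "U \<subseteq> K" "U \<noteq> {}" for U
      using sum_prod_column_sign_eq_0[OF assms] that by (simp add: K_def)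
  qed (use \<open>finite K\<close> in \<open>simp_all add: one_def\<close>)
  moreover have "{C\<in>Cspace N m. \<forall>u\<in>K. column_sign (snd u) C (fst u) = one u}
      = {C\<in>Cspace N m. \<forall>k\<in>T. Zk m C k = 1}"
    by (auto simp: K_def one_def Zk_eq_1_iff)
  moreover have "card K = card T * m" by (simp add: K_def card_cartesian_product)
  ultimately show ?thesis by simp
qed

lemma odd_digit_singleton:
  assumes "k \<in> Qset N"
  shows "\<exists>j l. odd (card {k'\<in>{k}. l \<in> digits (k' j)})"
proof -
  obtain j l where "l \<in> digits (k j)"
    using assms by (auto simp: Qset_def elim: nonzero_obtains_digit)
  then have "{k'\<in>{k}. l \<in> digits (k' j)} = {k}" by auto
  then have "card {k'\<in>{k}. l \<in> digits (k' j)} = 1" by simp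
  then show ?thesis by (intro exI[of _ j] exI[of _ l]) simp
qed

lemma xor_independent_singleton:
  assumes "k \<in> Qset N"
  shows "xor_independent {k}"
  unfolding xor_independent_def
proof (intro allI impI)
  fix U
  assume "U \<subseteq> {k}" "U \<noteq> {}"
  then have "U = {k}" by blast
  then show "\<exists>j l. odd (card {k\<in>U. l \<in> digits (k j)})"
    using odd_digit_singleton[OF assms] by simp
qed

lemma xor_independent_pair:
  assumes "k \<in> Qset N" "k' \<in> Qset N" "k \<noteq> k'"
  shows "xor_independent {k, k'}"
  unfolding xor_independent_def
proof (intro allI impI)
  fix U
  assume U: "U \<subseteq> {k, k'}" "U \<noteq> {}"
  obtain j2 where "k j2 \<noteq> k' j2" using assms(3) by auto
  then obtain l2 where l2: "l2 \<in> digits (k j2) \<longleftrightarrow> l2 \<notin> digits (k' j2)"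
    using digits_eq_iff by blast
  consider "U = {k}" | "U = {k'}" | "U = {k, k'}" using U by blast
  then show "\<exists>j l. odd (card {k\<in>U. l \<in> digits (k j)})"
  proof cases
    case 3
    then have "{k2\<in>U. l2 \<in> digits (k2 j2)} = (if l2 \<in> digits (k j2) then {k} else {k'})"
      using l2 by auto
    then have "card {k2\<in>U. l2 \<in> digits (k2 j2)} = 1" by simp
    then show ?thesis by (metis odd_one)
  qed (use odd_digit_singleton[OF assms(1)] odd_digit_singleton[OF assms(2)] in simp_all)
qed

section \<open>Comparison of the two sums\<close>

lemma card_Sk_event:
  fixes K :: "'n::finite freq set"
  assumes "xor_independent K" "K \<subseteq> Qset N"
  shows "real (card {D\<in>Dspace N. g (restrict (Sk D) K)}) * 2 ^ card K
       = real (card (Dspace N :: 'n digit_shift set)) * real (card {v \<in> PiE K (\<lambda>_. {-1, 1}). g v})"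
proof (rule card_sign_event)
  show "finite K" using finite_subset[OF assms(2) finite_Qset] .
  show "Sk D k = -1 \<or> Sk D k = 1" for D k
    by (simp add: Sk_eq_parity_sign parity_sign_cases)
  show "(\<Sum>D\<in>Dspace N. \<Prod>k\<in>U. Sk D k) = 0" if "U \<subseteq> K" "U \<noteq> {}" for U
    using sum_prod_Sk_eq_0[OF assms that] .
qed (rule finite_Dspace)

lemma card_Sspace_event:
  fixes K :: "'n::finite freq set"
  assumes "K \<subseteq> Qset N"
  shows "real (card {S\<in>Sspace N. g (restrict S K)}) * 2 ^ card K
       = real (card (Sspace N :: ('n freq \<Rightarrow> real) set)) * real (card {v \<in> PiE K (\<lambda>_. {-1, 1}). g v})"
proof (rule card_sign_event[where Y="\<lambda>S. S"])
  show "finite K" using finite_subset[OF assms finite_Qset] .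
  show "S k = -1 \<or> S k = 1" if "S \<in> Sspace N" "k \<in> K" for S k
    using that assms by (auto simp: Sspace_def PiE_def Pi_def)
  show "(\<Sum>S\<in>Sspace N. \<Prod>k\<in>U. S k) = 0" if "U \<subseteq> K" "U \<noteq> {}" for U
    using sum_prod_Sspace_eq_0 that assms by blast
qed (rule finite_Sspace)

lemma card_SUM1_event_eq_SUM1':
  fixes C :: "'n::finite gen_matrix"
  assumes indep: "xor_independent (dual_Qset N m C)"
  shows "card {r\<in>Dspace N \<times> Sspace N. SUM1 f N m (C, r) \<in> A}
       = card {r\<in>Dspace N \<times> Sspace N. SUM1' f N m (C, r) \<in> A}"
proof -
  let ?K = "dual_Qset N m C"
  define g where "g v \<longleftrightarrow> (\<Sum>k\<in>?K. v k * walsh_coeff f k) \<in> A" for v :: "'n freq \<Rightarrow> real"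
  define V where "V = real (card {v \<in> PiE ?K (\<lambda>_. {-1, 1}). g v})"
  have KQ: "?K \<subseteq> Qset N" by (auto simp: dual_Qset_def)
  have "{r\<in>Dspace N \<times> Sspace N. SUM1 f N m (C, r) \<in> A} = {D\<in>Dspace N. g (restrict (Sk D) ?K)} \<times> Sspace N"
    by (auto simp: SUM1_eq g_def)
  then have 1: "real (card {r\<in>Dspace N \<times> Sspace N. SUM1 f N m (C, r) \<in> A}) * 2 ^ card ?K
      = real (card (Dspace N :: 'n digit_shift set)) * V * real (card (Sspace N :: ('n freq \<Rightarrow> real) set))"
    using card_Sk_event[OF indep KQ, of g] by (simp add: card_cartesian_product V_def)
  have "{r\<in>Dspace N \<times> Sspace N. SUM1' f N m (C, r) \<in> A} = Dspace N \<times> {S\<in>Sspace N. g (restrict S ?K)}"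
    by (auto simp: SUM1'_eq g_def)
  then have 2: "real (card {r\<in>Dspace N \<times> Sspace N. SUM1' f N m (C, r) \<in> A}) * 2 ^ card ?K
      = real (card (Dspace N :: 'n digit_shift set)) * V * real (card (Sspace N :: ('n freq \<Rightarrow> real) set))"
    using card_Sspace_event[OF KQ, of g] by (simp add: card_cartesian_product V_def)
  have "real (card {r\<in>Dspace N \<times> Sspace N. SUM1 f N m (C, r) \<in> A}) * 2 ^ card ?K
      = real (card {r\<in>Dspace N \<times> Sspace N. SUM1' f N m (C, r) \<in> A}) * 2 ^ card ?K"
    using 1 2 by simp
  then show ?thesis by simp
qed

definition dependent_designs :: "nat \<Rightarrow> nat \<Rightarrow> 'n::finite gen_matrix set" where
  "dependent_designs N m = {C\<in>Cspace N m. \<not> xor_independent (dual_Qset N m C)}"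

lemma prob_map_Omega:
  fixes h :: "'n::finite gen_matrix \<times> 'n digit_shift \<times> ('n freq \<Rightarrow> real) \<Rightarrow> 'a"
  shows "measure_pmf.prob (map_pmf h (Omega N m)) A
     = (\<Sum>C\<in>Cspace N m. real (card {r\<in>Dspace N \<times> Sspace N. h (C, r) \<in> A}))
       / (real (card (Cspace N m :: 'n gen_matrix set))
          * real (card (Dspace N \<times> Sspace N :: ('n digit_shift \<times> ('n freq \<Rightarrow> real)) set)))"
proof -
  let ?CS = "Cspace N m :: 'n gen_matrix set"
  let ?R = "Dspace N \<times> Sspace N :: ('n digit_shift \<times> ('n freq \<Rightarrow> real)) set"
  have finR: "finite ?R" by (simp add: finite_Dspace finite_Sspace)
  have "?CS \<noteq> {}" "?R \<noteq> {}"
    using card_Cspace_pos[of N m, where 'n='n] card_Dspace_pos[of N, where 'n='n]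
      card_Sspace_pos[of N, where 'n='n] by auto
  then have "?CS \<times> ?R \<noteq> {}" by simp
  then have "measure_pmf.prob (map_pmf h (Omega N m)) A = real (card (?CS \<times> ?R \<inter> h -` A)) / real (card (?CS \<times> ?R))"
    unfolding Omega_def measure_map_pmf by (rule measure_pmf_of_set) (simp add: finite_Cspace finR)
  also have "?CS \<times> ?R \<inter> h -` A = Sigma ?CS (\<lambda>C. {r\<in>?R. h (C, r) \<in> A})" by auto
  also have "card \<dots> = (\<Sum>C\<in>?CS. card {r\<in>?R. h (C, r) \<in> A})"
    by (rule card_SigmaI[OF finite_Cspace]) (use finR in auto)
  finally show ?thesis by (simp add: card_cartesian_product)
qed

lemma prob_SUM1_SUM1'_diff_le:
  fixes f :: "real^'n::finite \<Rightarrow> real"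
  shows "\<bar>measure_pmf.prob (map_pmf (SUM1 f N m) (Omega N m)) A
          - measure_pmf.prob (map_pmf (SUM1' f N m) (Omega N m)) A\<bar>
     \<le> real (card (dependent_designs N m :: 'n gen_matrix set)) / real (card (Cspace N m :: 'n gen_matrix set))"
proof -
  let ?CS = "Cspace N m :: 'n gen_matrix set"
  let ?R = "Dspace N \<times> Sspace N :: ('n digit_shift \<times> ('n freq \<Rightarrow> real)) set"
  define e where "e h C = real (card {r\<in>?R. h (C, r) \<in> A})" for h :: "_ \<Rightarrow> real" and C :: "'n gen_matrix"
  define cs where "cs = real (card ?CS)"
  define rs where "rs = real (card ?R)"
  have cs: "cs > 0" using card_Cspace_pos[of N m, where 'n='n] by (simp add: cs_def)
  have rs: "rs > 0"
    using card_Dspace_pos[of N, where 'n='n] card_Sspace_pos[of N, where 'n='n]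
    by (simp add: rs_def card_cartesian_product)
  have prob: "measure_pmf.prob (map_pmf h (Omega N m)) A = (\<Sum>C\<in>?CS. e h C) / (cs * rs)" for h
    unfolding prob_map_Omega by (simp add: e_def cs_def rs_def)
  have diff: "\<bar>e (SUM1 f N m) C - e (SUM1' f N m) C\<bar> \<le> of_bool (C \<in> dependent_designs N m) * rs"
    if "C \<in> ?CS" for C
  proof (cases "C \<in> dependent_designs N m")
    case True
    have bound: "0 \<le> e h C \<and> e h C \<le> rs" for h
    proof -
      have "card {r\<in>?R. h (C, r) \<in> A} \<le> card ?R"
        by (rule card_mono) (simp_all add: finite_Dspace finite_Sspace)
      then show ?thesis unfolding e_def rs_def by linarith
    qed
    show ?thesis using True bound[of "SUM1 f N m"] bound[of "SUM1' f N m"] by (auto simp: abs_le_iff)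
  next
    case False
    then show ?thesis
      using card_SUM1_event_eq_SUM1'[of N m C f A] that by (simp add: e_def dependent_designs_def)
  qed
  have "\<bar>(\<Sum>C\<in>?CS. e (SUM1 f N m) C) - (\<Sum>C\<in>?CS. e (SUM1' f N m) C)\<bar>
      \<le> (\<Sum>C\<in>?CS. \<bar>e (SUM1 f N m) C - e (SUM1' f N m) C\<bar>)"
    unfolding sum_subtractf[symmetric] by (rule sum_abs)
  also have "\<dots> \<le> (\<Sum>C\<in>?CS. of_bool (C \<in> dependent_designs N m) * rs)"
    using diff by (rule sum_mono)
  also have "\<dots> = real (card (dependent_designs N m :: 'n gen_matrix set)) * rs"
    by (simp add: sum_distrib_right[symmetric] finite_Cspace Int_def dependent_designs_def)
  finally have "\<bar>(\<Sum>C\<in>?CS. e (SUM1 f N m) C) - (\<Sum>C\<in>?CS. e (SUM1' f N m) C)\<bar> / (cs * rs)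
      \<le> real (card (dependent_designs N m :: 'n gen_matrix set)) * rs / (cs * rs)"
    using cs rs by (intro divide_right_mono) auto
  then show ?thesis
    unfolding prob using cs rs by (simp add: cs_def flip: diff_divide_distrib)
qed

lemma dTV_SUM1_SUM1'_le:
  fixes f :: "real^'n::finite \<Rightarrow> real"
  shows "dTV (map_pmf (SUM1 f N m) (Omega N m)) (map_pmf (SUM1' f N m) (Omega N m))
     \<le> real (card (dependent_designs N m :: 'n gen_matrix set)) / real (card (Cspace N m :: 'n gen_matrix set))"
  unfolding dTV_def
proof (rule cSUP_least)
  show "\<bar>measure_pmf.prob (map_pmf (SUM1 f N m) (Omega N m)) A
      - measure_pmf.prob (map_pmf (SUM1' f N m) (Omega N m)) A\<bar>
    \<le> real (card (dependent_designs N m :: 'n gen_matrix set)) / real (card (Cspace N m :: 'n gen_matrix set))" for A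
    by (rule prob_SUM1_SUM1'_diff_le)
qed auto

section \<open>Dependent dual sets\<close>

lemma sum_Zk_Cspace:
  fixes k :: "'n::finite freq"
  assumes "k \<in> Qset N"
  shows "(\<Sum>C\<in>Cspace N m. Zk m C k) = real (card (Cspace N m :: 'n::finite gen_matrix set)) / 2 ^ m"
proof -
  have "(\<Sum>C\<in>Cspace N m. Zk m C k) = real (card {C\<in>Cspace N m. \<forall>k'\<in>{k}. Zk m C k' = 1})"
    by (subst Zk_eq_indicator) (simp add: finite_Cspace Int_def)
  then show ?thesis
    using card_Zk_all_eq_1[OF xor_independent_singleton[OF assms], of N m] assms
    by (simp add: field_simps)
qed

lemma sum_Zk_Zk_Cspace:
  fixes k :: "'n::finite freq"
  assumes "k \<in> Qset N" "k' \<in> Qset N" "k \<noteq> k'"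
  shows "(\<Sum>C\<in>Cspace N m. Zk m C k * Zk m C k')
       = real (card (Cspace N m :: 'n::finite gen_matrix set)) / 4 ^ m"
proof -
  have "(\<Sum>C\<in>Cspace N m. Zk m C k * Zk m C k') = real (card {C\<in>Cspace N m. \<forall>k''\<in>{k, k'}. Zk m C k'' = 1})"
    by (subst (1 2) Zk_eq_indicator) (simp add: finite_Cspace Int_def flip: of_bool_conj)
  moreover have "card {k, k'} = 2" using assms(3) by simp
  then have "(2::real) ^ (card {k, k'} * m) = 4 ^ m"
    unfolding power_mult by simp
  ultimately show ?thesis
    using card_Zk_all_eq_1[OF xor_independent_pair[OF assms], of N m] assms
    by (simp add: field_simps)
qed

lemma sum_card_dual_Qset:
  "(\<Sum>C\<in>(Cspace N m :: 'n::finite gen_matrix set). real (card (dual_Qset N m C)))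
     = real (card (Qset N :: 'n freq set)) * real (card (Cspace N m :: 'n gen_matrix set)) / 2 ^ m"
  unfolding card_dual_Qset by (subst sum.swap) (simp add: sum_Zk_Cspace cong: sum.cong_simp)

lemma sum_card_dual_Qset_sq:
  "(\<Sum>C\<in>(Cspace N m :: 'n::finite gen_matrix set). real (card (dual_Qset N m C)) ^ 2)
     = real (card (Cspace N m :: 'n gen_matrix set))
       * (real (card (Qset N :: 'n freq set)) / 2 ^ m
          + real (card (Qset N :: 'n freq set)) * (real (card (Qset N :: 'n freq set)) - 1) / 4 ^ m)"
proof -
  let ?CS = "Cspace N m :: 'n gen_matrix set"
  let ?Q = "Qset N :: 'n freq set"
  have "(\<Sum>C\<in>?CS. real (card (dual_Qset N m C)) ^ 2) = (\<Sum>k\<in>?Q. \<Sum>k'\<in>?Q. \<Sum>C\<in>?CS. Zk m C k * Zk m C k')"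
    unfolding card_dual_Qset power2_eq_square sum_product
    by (subst sum.swap) (simp add: sum.swap[of _ ?CS])
  also have "\<dots> = (\<Sum>k\<in>?Q. real (card ?CS) / 2 ^ m + (real (card ?Q) - 1) * (real (card ?CS) / 4 ^ m))"
  proof (rule sum.cong[OF refl])
    fix k
    assume k: "k \<in> ?Q"
    have "(\<Sum>k'\<in>?Q. \<Sum>C\<in>?CS. Zk m C k * Zk m C k')
        = (\<Sum>C\<in>?CS. Zk m C k * Zk m C k) + (\<Sum>k'\<in>?Q - {k}. \<Sum>C\<in>?CS. Zk m C k * Zk m C k')"
      using k by (intro sum.remove) auto
    also have "(\<Sum>C\<in>?CS. Zk m C k * Zk m C k) = real (card ?CS) / 2 ^ m"
      using sum_Zk_Cspace[OF k] by (simp add: Zk_mult_self)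
    also have "(\<Sum>k'\<in>?Q - {k}. \<Sum>C\<in>?CS. Zk m C k * Zk m C k') = (\<Sum>k'\<in>?Q - {k}. real (card ?CS) / 4 ^ m)"
      using k by (intro sum.cong refl sum_Zk_Zk_Cspace) auto
    also have "\<dots> = (real (card ?Q) - 1) * (real (card ?CS) / 4 ^ m)"
    proof -
      have "1 \<le> card ?Q" using k by (auto simp: Suc_le_eq card_gt_0_iff)
      then show ?thesis using k by (simp add: card_Diff_singleton of_nat_diff)
    qed
    finally show "(\<Sum>k'\<in>?Q. \<Sum>C\<in>?CS. Zk m C k * Zk m C k')
        = real (card ?CS) / 2 ^ m + (real (card ?Q) - 1) * (real (card ?CS) / 4 ^ m)" .
  qed
  finally show ?thesis by (simp add: algebra_simps)
qed

text \<open>Chebyshev's inequality: |K(C)| has mean |Q_N| / 2^m \<le> a and variance at most its mean.\<close>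
lemma card_large_dual_Qset_le:
  fixes a :: real
  assumes a: "a > 0" and mean: "real (card (Qset N :: 'n::finite freq set)) / 2 ^ m \<le> a"
  shows "real (card {C\<in>(Cspace N m :: 'n gen_matrix set). real (card (dual_Qset N m C)) > 2 * a}) * a
     \<le> real (card (Cspace N m :: 'n gen_matrix set))"
proof -
  let ?CS = "Cspace N m :: 'n gen_matrix set"
  define X where "X C = real (card (dual_Qset N m C))" for C :: "'n gen_matrix"
  define q where "q = real (card (Qset N :: 'n freq set))"
  define cs where "cs = real (card ?CS)"
  define \<mu> where "\<mu> = q / 2 ^ m"
  have four: "(4::real) ^ m = 2 ^ m * 2 ^ m"
    by (simp flip: power_mult_distrib)
  have "(\<Sum>C\<in>?CS. (X C - \<mu>)\<^sup>2) = (\<Sum>C\<in>?CS. (X C)\<^sup>2) - 2 * \<mu> * (\<Sum>C\<in>?CS. X C) + cs * \<mu>\<^sup>2"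
    by (simp add: power2_diff sum.distrib sum_subtractf sum_distrib_left cs_def ac_simps)
  also have "\<dots> = cs * (\<mu> - q / 4 ^ m)"
    unfolding X_def sum_card_dual_Qset sum_card_dual_Qset_sq q_def[symmetric] cs_def[symmetric]
    by (simp add: \<mu>_def four field_simps power2_eq_square)
  also have "\<dots> \<le> cs * a"
  proof (rule mult_left_mono)
    have "0 \<le> q / 4 ^ m" by (simp add: q_def)
    then show "\<mu> - q / 4 ^ m \<le> a" using mean unfolding \<mu>_def q_def by linarith
  qed (simp add: cs_def)
  finally have var: "(\<Sum>C\<in>?CS. (X C - \<mu>)\<^sup>2) \<le> cs * a" .
  have "real (card {C\<in>?CS. X C > 2 * a}) * a\<^sup>2 = (\<Sum>C\<in>{C\<in>?CS. X C > 2 * a}. a\<^sup>2)"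
    by simp
  also have "\<dots> \<le> (\<Sum>C\<in>{C\<in>?CS. X C > 2 * a}. (X C - \<mu>)\<^sup>2)"
    using mean a by (intro sum_mono power_mono) (auto simp: \<mu>_def q_def)
  also have "\<dots> \<le> (\<Sum>C\<in>?CS. (X C - \<mu>)\<^sup>2)"
    by (intro sum_mono2 finite_Cspace) auto
  finally have "real (card {C\<in>?CS. X C > 2 * a}) * a * a \<le> cs * a"
    using var by (simp add: power2_eq_square mult.assoc)
  then show ?thesis using a by (simp add: X_def cs_def)
qed

lemma bit_xorsum: "bit (xorsum r ks j) b \<longleftrightarrow> odd (card {i\<in>{..<r}. bit (ks i j) b})"
proof (induction r)
  case 0
  then show ?case by (simp add: xorsum_def)
next
  case (Suc r)
  have "card {i\<in>{..<Suc r}. bit (ks i j) b} = card {i\<in>{..<r}. bit (ks i j) b} + of_bool (bit (ks r j) b)"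
    using card_filter_remove[of "{..<Suc r}" r "\<lambda>i. bit (ks i j) b"] by (simp add: lessThan_Suc)
  moreover have "xorsum (Suc r) ks j = xor (xorsum r ks j) (ks r j)"
    by (simp add: xorsum_def)
  ultimately show ?case using Suc by (simp add: bit_xor_iff)
qed

lemma xorsum_eq_of_odd_digits:
  assumes bij: "bij_betw ks {..<q} T"
    and odd: "\<And>j l. odd (card {k\<in>T. l \<in> digits (k j)}) \<longleftrightarrow> l \<in> digits (k0 j)"
  shows "xorsum q ks = k0"
proof
  fix j
  have "bit (xorsum q ks j) b = bit (k0 j) b" for b
  proof -
    have "{k\<in>T. bit (k j) b} = ks ` {i\<in>{..<q}. bit (ks i j) b}"
      using bij by (auto simp: bij_betw_def)
    moreover have "inj_on ks {i\<in>{..<q}. bit (ks i j) b}"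
      using bij by (auto simp: bij_betw_def intro: inj_on_subset)
    ultimately have "card {k\<in>T. bit (k j) b} = card {i\<in>{..<q}. bit (ks i j) b}"
      by (simp add: card_image)
    then show ?thesis
      using odd[where j=j and l="Suc b"] by (simp add: bit_xorsum digits_def)
  qed
  then show "xorsum q ks j = k0 j" by (simp add: bit_eq_iff)
qed

lemma two_le_card_of_odd_digits:
  assumes "finite T" "k0 \<notin> T" "k0 \<noteq> (\<lambda>_. 0)"
    and odd: "\<And>j l. odd (card {k\<in>T. l \<in> digits (k j)}) \<longleftrightarrow> l \<in> digits (k0 j)"
  shows "2 \<le> card T"
proof -
  have "card T \<noteq> 0"
  proof
    assume "card T = 0"
    then have "digits (k0 j) = {}" for j
      using assms(1) odd by auto
    then show False
      using assms(3) by (simp add: fun_eq_iff digits_eq_empty_iff)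
  qed
  moreover have "card T \<noteq> 1"
  proof
    assume "card T = 1"
    then obtain k1 where T1: "T = {k1}" by (auto simp: card_Suc_eq)
    have "l \<in> digits (k1 j) \<longleftrightarrow> l \<in> digits (k0 j)" for j l
    proof -
      have eq: "{k\<in>T. l \<in> digits (k j)} = (if l \<in> digits (k1 j) then {k1} else {})"
        by (auto simp: T1)
      show ?thesis using odd[where j=j and l=l] unfolding eq by (cases "l \<in> digits (k1 j)") simp_all
    qed
    then have "digits (k1 j) = digits (k0 j)" for j by blast
    then have "k1 = k0" by (simp add: fun_eq_iff digits_eq_iff)
    then show False using T1 assms(2) by simp
  qed
  ultimately show ?thesis by linarith
qed

text \<open>Remove one element k0 from a minimal nonempty subset of K whose digit counts are all even:
  the rest is independent and its XOR is k0.\<close>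
lemma dependent_obtains_circuit:
  assumes dep: "\<not> xor_independent K" and "finite K" and nonzero: "(\<lambda>_. 0) \<notin> K"
  obtains T k0 where "T \<subseteq> K" "k0 \<in> K" "k0 \<notin> T" "2 \<le> card T" "xor_independent T"
    "\<And>j l. odd (card {k\<in>T. l \<in> digits (k j)}) \<longleftrightarrow> l \<in> digits (k0 j)"
proof -
  define P where "P U \<longleftrightarrow> U \<subseteq> K \<and> U \<noteq> {} \<and> (\<forall>j l. even (card {k\<in>U. l \<in> digits (k j)}))" for U
  obtain U0 where "P U0"
    using dep unfolding xor_independent_def P_def by auto
  then obtain U where PU: "P U" and minU: "\<And>V. P V \<Longrightarrow> card U \<le> card V"
    using ex_has_least_nat[of P U0 card] by blast
  have UK: "U \<subseteq> K" "U \<noteq> {}" and even: "\<And>j l. even (card {k\<in>U. l \<in> digits (k j)})"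
    using PU unfolding P_def by auto
  have finU: "finite U" using UK(1) \<open>finite K\<close> by (rule finite_subset)
  obtain k0 where k0: "k0 \<in> U" using UK by auto
  define T where "T = U - {k0}"
  have odd: "odd (card {k\<in>T. l \<in> digits (k j)}) \<longleftrightarrow> l \<in> digits (k0 j)" for j l
    using even[of l j] card_filter_remove[OF finU k0, of "\<lambda>k. l \<in> digits (k j)"]
    by (simp add: T_def)
  have "xor_independent T"
    unfolding xor_independent_def
  proof (intro allI impI)
    fix V
    assume V: "V \<subseteq> T" "V \<noteq> {}"
    have "card V < card U"
      using V k0 finU unfolding T_def by (intro psubset_card_mono) auto
    then have "\<not> P V" using minU by fastforce
    then show "\<exists>j l. odd (card {k\<in>V. l \<in> digits (k j)})"
      using V UK unfolding P_def T_def by auto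
  qed
  moreover have "2 \<le> card T"
    using finU k0 UK(1) nonzero odd by (intro two_le_card_of_odd_digits) (auto simp: T_def)
  moreover have "T \<subseteq> K" "k0 \<in> K" "k0 \<notin> T" using UK k0 by (auto simp: T_def)
  ultimately show ?thesis using that odd by blast
qed

definition xor_circuits :: "nat \<Rightarrow> nat \<Rightarrow> 'n::finite freq set set" where
  "xor_circuits N q = {T. T \<subseteq> Qset N \<and> card T = q \<and> xor_independent T \<and>
     (\<exists>k0\<in>Qset N. \<forall>j l. odd (card {k\<in>T. l \<in> digits (k j)}) \<longleftrightarrow> l \<in> digits (k0 j))}"

lemma finite_xor_circuits: "finite (xor_circuits N q :: 'n::finite freq set set)"
  by (rule finite_subset[of _ "Pow (Qset N)"]) (auto simp: xor_circuits_def)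

lemma card_xor_circuits_le:
  "card (xor_circuits N q :: 'n::finite freq set set)
     \<le> card {ks \<in> PiE {..<q} (\<lambda>_. Qset N :: 'n freq set). xorsum q ks \<in> Qset N}"
proof -
  let ?P = "PiE {..<q} (\<lambda>_. Qset N :: 'n freq set)"
  define e where "e T = (SOME ks. ks \<in> ?P \<and> bij_betw ks {..<q} T)" for T :: "'n freq set"
  have e: "e T \<in> ?P \<and> bij_betw (e T) {..<q} T" if T: "T \<in> xor_circuits N q" for T
  proof -
    have TQ: "T \<subseteq> Qset N" and cT: "card T = q" using T by (auto simp: xor_circuits_def)
    obtain h where "bij_betw h {..<q} T"
      using ex_bij_betw_nat_finite[OF finite_subset[OF TQ finite_Qset]] cT
      by (auto simp: atLeast0LessThan)
    then have "bij_betw (restrict h {..<q}) {..<q} T" "restrict h {..<q} \<in> ?P"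
      using TQ by (auto simp: bij_betw_def inj_on_def)
    then have "\<exists>ks. ks \<in> ?P \<and> bij_betw ks {..<q} T" by blast
    then show ?thesis unfolding e_def by (rule someI_ex)
  qed
  show ?thesis
  proof (rule card_inj_on_le)
    show "inj_on e (xor_circuits N q)"
      by (rule inj_onI) (metis bij_betw_imp_surj_on e)
    show "e ` xor_circuits N q \<subseteq> {ks \<in> ?P. xorsum q ks \<in> Qset N}"
    proof
      fix ks
      assume "ks \<in> e ` xor_circuits N q"
      then obtain T where T: "T \<in> xor_circuits N q" and ks: "ks = e T" by blast
      obtain k0 where k0: "k0 \<in> Qset N"
        and odd: "\<And>j l. odd (card {k\<in>T. l \<in> digits (k j)}) \<longleftrightarrow> l \<in> digits (k0 j)"
        using T unfolding xor_circuits_def by blast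
      have "xorsum q ks = k0"
        using e[OF T] odd unfolding ks by (intro xorsum_eq_of_odd_digits) auto
      then show "ks \<in> {ks \<in> ?P. xorsum q ks \<in> Qset N}" using e[OF T] k0 ks by auto
    qed
    show "finite {ks \<in> ?P. xorsum q ks \<in> Qset N}" by (simp add: finite_PiE)
  qed
qed

lemma card_xor_tuples_le:
  fixes A B :: real
  assumes "xor_bound TYPE('n::finite) A B" and "N \<ge> 1" and "q \<ge> 2"
  shows "real (card {ks \<in> PiE {..<q} (\<lambda>_. Qset N :: 'n freq set). xorsum q ks \<in> Qset N})
     \<le> real (card (Qset N :: 'n freq set)) ^ q * (A ^ q * real N powr (real q / 4) * real q powr (- B * sqrt (real N)))"
proof -
  let ?P = "PiE {..<q} (\<lambda>_. Qset N :: 'n freq set)"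
  have finP: "finite ?P" by (intro finite_PiE) auto
  have neP: "?P \<noteq> {}" using Qset_nonempty[OF assms(2), where 'n='n] by (simp add: PiE_eq_empty_iff)
  have cardP: "card ?P = card (Qset N :: 'n freq set) ^ q" by (simp add: card_PiE)
  have "real (card {ks \<in> ?P. xorsum q ks \<in> Qset N}) / real (card ?P)
      = measure_pmf.prob (pmf_of_set ?P) {ks. xorsum q ks \<in> Qset N}"
    by (subst measure_pmf_of_set[OF neP finP]) (simp add: Int_def)
  also have "\<dots> \<le> A ^ q * real N powr (real q / 4) * real q powr (- B * sqrt (real N))"
    using assms unfolding xor_bound_def by blast
  finally have "real (card {ks \<in> ?P. xorsum q ks \<in> Qset N})
      \<le> (A ^ q * real N powr (real q / 4) * real q powr (- B * sqrt (real N))) * real (card ?P)"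
    using finP neP by (simp add: divide_le_eq card_gt_0_iff)
  then show ?thesis by (simp add: cardP ac_simps)
qed

lemma dependent_design_obtains_circuit:
  fixes C :: "'n::finite gen_matrix"
  assumes C: "C \<in> dependent_designs N m" and small: "real (card (dual_Qset N m C)) \<le> 2 * a"
  obtains q T where "q \<in> {2..nat \<lfloor>2 * a\<rfloor>}" "T \<in> xor_circuits N q" "\<forall>k\<in>T. Zk m C k = 1"
proof -
  have KQ: "dual_Qset N m C \<subseteq> Qset N" by (auto simp: dual_Qset_def)
  have dep: "\<not> xor_independent (dual_Qset N m C)" using C by (simp add: dependent_designs_def)
  have finK: "finite (dual_Qset N m C)" using KQ by (rule finite_subset) simp
  have nonzero: "(\<lambda>_. 0) \<notin> dual_Qset N m C" by (simp add: dual_Qset_def Qset_def)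
  obtain T k0 where T: "T \<subseteq> dual_Qset N m C" "k0 \<in> dual_Qset N m C" "k0 \<notin> T"
      "2 \<le> card T" "xor_independent T"
    and odd: "\<And>j l. odd (card {k\<in>T. l \<in> digits (k j)}) \<longleftrightarrow> l \<in> digits (k0 j)"
    using dependent_obtains_circuit[OF dep finK nonzero] by blast
  have "card (insert k0 T) \<le> card (dual_Qset N m C)" using T finK by (intro card_mono) auto
  then have "real (card T) + 1 \<le> 2 * a"
    using T(3) finite_subset[OF T(1) finK] small by simp
  then have "card T \<in> {2..nat \<lfloor>2 * a\<rfloor>}" using T(4) by (simp add: le_nat_floor)
  moreover have "T \<in> xor_circuits N (card T)"
    unfolding xor_circuits_def using T odd KQ by auto
  moreover have "\<forall>k\<in>T. Zk m C k = 1" using T(1) by (auto simp: dual_Qset_def)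
  ultimately show ?thesis by (rule that)
qed

lemma dependent_designs_subset:
  "(dependent_designs N m :: 'n::finite gen_matrix set)
     \<subseteq> {C\<in>Cspace N m. real (card (dual_Qset N m C)) > 2 * a}
       \<union> (\<Union>q\<in>{2..nat \<lfloor>2 * a\<rfloor>}. \<Union>T\<in>xor_circuits N q. {C\<in>Cspace N m. \<forall>k\<in>T. Zk m C k = 1})"
proof
  fix C :: "'n gen_matrix"
  assume C: "C \<in> dependent_designs N m"
  then have CS: "C \<in> Cspace N m" by (simp add: dependent_designs_def)
  show "C \<in> {C\<in>Cspace N m. real (card (dual_Qset N m C)) > 2 * a}
      \<union> (\<Union>q\<in>{2..nat \<lfloor>2 * a\<rfloor>}. \<Union>T\<in>xor_circuits N q. {C\<in>Cspace N m. \<forall>k\<in>T. Zk m C k = 1})"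
  proof (cases "real (card (dual_Qset N m C)) \<le> 2 * a")
    case True
    then obtain q T where "q \<in> {2..nat \<lfloor>2 * a\<rfloor>}" "T \<in> xor_circuits N q" "\<forall>k\<in>T. Zk m C k = 1"
      by (rule dependent_design_obtains_circuit[OF C])
    then show ?thesis using CS by blast
  qed (use CS in simp)
qed

lemma sum_card_survivors_xor_circuits:
  "(\<Sum>T\<in>(xor_circuits N q :: 'n::finite freq set set). real (card {C\<in>Cspace N m. \<forall>k\<in>T. Zk m C k = 1}))
     = real (card (xor_circuits N q :: 'n freq set set)) * (real (card (Cspace N m :: 'n gen_matrix set)) / 2 ^ (q * m))"
proof -
  have "real (card {C\<in>Cspace N m. \<forall>k\<in>T. Zk m C k = 1}) = real (card (Cspace N m :: 'n gen_matrix set)) / 2 ^ (q * m)"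
    if "T \<in> xor_circuits N q" for T :: "'n freq set"
    using that card_Zk_all_eq_1[of T N m] by (simp add: xor_circuits_def field_simps)
  then have "(\<Sum>T\<in>(xor_circuits N q :: 'n freq set set). real (card {C\<in>Cspace N m. \<forall>k\<in>T. Zk m C k = 1}))
      = (\<Sum>T\<in>(xor_circuits N q :: 'n freq set set). real (card (Cspace N m :: 'n gen_matrix set)) / 2 ^ (q * m))"
    by (rule sum.cong[OF refl])
  then show ?thesis by simp
qed

lemma card_dependent_designs_le:
  fixes a :: real
  assumes a: "a > 0" and mean: "real (card (Qset N :: 'n::finite freq set)) / 2 ^ m \<le> a"
  shows "real (card (dependent_designs N m :: 'n gen_matrix set))
     \<le> real (card (Cspace N m :: 'n gen_matrix set)) / a
       + real (card (Cspace N m :: 'n gen_matrix set)) *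
         (\<Sum>q\<in>{2..nat \<lfloor>2 * a\<rfloor>}. real (card (xor_circuits N q :: 'n freq set set)) / 2 ^ (q * m))"
proof -
  let ?CS = "Cspace N m :: 'n gen_matrix set"
  let ?M = "nat \<lfloor>2 * a\<rfloor>"
  define survivors where "survivors T = {C\<in>?CS. \<forall>k\<in>T. Zk m C k = 1}" for T :: "'n freq set"
  define large where "large = {C\<in>?CS. real (card (dual_Qset N m C)) > 2 * a}"
  define circuits where "circuits = (\<Union>q\<in>{2..?M}. \<Union>T\<in>xor_circuits N q. survivors T)"
  have "card (dependent_designs N m :: 'n gen_matrix set) \<le> card (large \<union> circuits)"
    using dependent_designs_subset[of N m a, where 'n='n]
    by (intro card_mono finite_subset[OF _ finite_Cspace[of N m]])
      (auto simp: large_def circuits_def survivors_def)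
  also have "\<dots> \<le> card large + (\<Sum>q\<in>{2..?M}. \<Sum>T\<in>xor_circuits N q. card (survivors T))"
  proof -
    have "card circuits \<le> (\<Sum>q\<in>{2..?M}. card (\<Union>T\<in>xor_circuits N q. survivors T))"
      unfolding circuits_def by (rule card_UN_le) simp
    also have "\<dots> \<le> (\<Sum>q\<in>{2..?M}. \<Sum>T\<in>xor_circuits N q. card (survivors T))"
      by (intro sum_mono card_UN_le finite_xor_circuits)
    finally show ?thesis using card_Un_le[of large circuits] by linarith
  qed
  finally have "real (card (dependent_designs N m :: 'n gen_matrix set))
      \<le> real (card large) + (\<Sum>q\<in>{2..?M}. \<Sum>T\<in>xor_circuits N q. real (card (survivors T)))"
    by (simp flip: of_nat_sum of_nat_add)
  moreover have "(\<Sum>q\<in>{2..?M}. \<Sum>T\<in>xor_circuits N q. real (card (survivors T)))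
      = real (card ?CS) * (\<Sum>q\<in>{2..?M}. real (card (xor_circuits N q :: 'n freq set set)) / 2 ^ (q * m))"
    unfolding survivors_def sum_card_survivors_xor_circuits by (simp add: sum_distrib_left mult.commute)
  moreover have "real (card large) \<le> real (card ?CS) / a"
    using card_large_dual_Qset_le[OF a mean] a by (simp add: large_def pos_le_divide_eq)
  ultimately show ?thesis by linarith
qed

section \<open>The size of Q_N\<close>

lemma ln_one_plus_sums:
  fixes y :: real assumes y: "0 \<le> y" "y < 1"
  shows "(\<lambda>n. (y ^ n - y ^ (2 * n)) / real n) sums ln (1 + y)"
proof -
  have a: "(\<lambda>n. - ((-(-y))^n) / real n) sums ln (1 + (-y))"
    by (rule ln_series') (use y in auto)
  have b: "(\<lambda>n. - ((-(-(y^2)))^n) / real n) sums ln (1 + (-(y^2)))"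
    by (rule ln_series') (use y in \<open>auto simp: abs_square_less_1\<close>)
  have "(\<lambda>n. - ((-(-(y^2)))^n) / real n - (- ((-(-y))^n) / real n)) sums (ln (1 + (-(y^2))) - ln (1 + (-y)))"
    by (rule sums_diff[OF b a])
  moreover have "ln (1 + (-(y^2))) - ln (1 + (-y)) = ln (1 + y)"
  proof -
    have "1 - y^2 = (1 - y) * (1 + y)" by (simp add: power2_eq_square algebra_simps)
    then have "ln (1 - y^2) = ln (1 - y) + ln (1 + y)" using y by (simp add: ln_mult)
    then show ?thesis by simp
  qed
  moreover have "(\<lambda>n. - ((-(-(y^2)))^n) / real n - (- ((-(-y))^n) / real n)) = (\<lambda>n. (y ^ n - y ^ (2 * n)) / real n)"
    by (rule ext) (simp add: power_mult diff_divide_distrib)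
  ultimately show ?thesis by simp
qed

lemma sum_power_diff_le:
  fixes z :: real
  assumes z: "0 \<le> z" "z < 1"
  shows "(\<Sum>l\<in>{1..N}. z ^ l - z ^ (2 * l)) \<le> z / (1 - z\<^sup>2)"
proof -
  have z2: "z\<^sup>2 < 1" using z by (simp add: abs_square_less_1)
  have "(\<lambda>l. z * z ^ l - z\<^sup>2 * (z\<^sup>2) ^ l) sums (z * (1 / (1 - z)) - z\<^sup>2 * (1 / (1 - z\<^sup>2)))"
    using z z2 by (intro sums_diff sums_mult geometric_sums) auto
  moreover have "z * (1 / (1 - z)) - z\<^sup>2 * (1 / (1 - z\<^sup>2)) = z / (1 - z\<^sup>2)"
  proof -
    have e: "1 - z\<^sup>2 = (1 - z) * (1 + z)" by (simp add: power2_eq_square algebra_simps)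
    have "1 / (1 - z) = (1 + z) / (1 - z\<^sup>2)" unfolding e using z by simp
    then have "z * (1 / (1 - z)) - z\<^sup>2 * (1 / (1 - z\<^sup>2)) = (z * (1 + z) - z\<^sup>2) / (1 - z\<^sup>2)"
      by (simp add: diff_divide_distrib)
    also have "z * (1 + z) - z\<^sup>2 = z" by (simp add: power2_eq_square algebra_simps)
    finally show ?thesis .
  qed
  moreover have "z * z ^ l - z\<^sup>2 * (z\<^sup>2) ^ l = z ^ Suc l - z ^ (2 * Suc l)" for l
    by (simp add: power_mult power2_eq_square)
  ultimately have g: "(\<lambda>l. z ^ Suc l - z ^ (2 * Suc l)) sums (z / (1 - z\<^sup>2))" by simp
  have nonneg: "0 \<le> z ^ Suc l - z ^ (2 * Suc l)" for l
  proof -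
    have "z ^ (2 * Suc l) \<le> z ^ Suc l" using z by (intro power_decreasing) auto
    then show ?thesis by simp
  qed
  have "(\<Sum>l\<in>{1..N}. z ^ l - z ^ (2 * l)) = (\<Sum>l<N. z ^ Suc l - z ^ (2 * Suc l))"
    using sum.atLeast1_atMost_eq[of "\<lambda>l. z ^ l - z ^ (2 * l)" N] by simp
  also have "\<dots> \<le> z / (1 - z\<^sup>2)"
    using sum_le_suminf[OF sums_summable[OF g], of "{..<N}"] nonneg g by (simp add: sums_iff)
  finally show ?thesis .
qed

lemma ln_series_term_le:
  fixes t :: real
  assumes t: "t > 0" and n: "n > 0"
  shows "(\<Sum>l\<in>{1..N}. (exp (- t * real l) ^ n - exp (- t * real l) ^ (2 * n)) / real n)
    \<le> 1 / (2 * t * (real n)\<^sup>2)"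
proof -
  define z where "z = exp (- t * real n)"
  define u where "u = t * real n"
  have u: "u > 0" using t n by (simp add: u_def)
  have z: "0 \<le> z" "z < 1" using u by (auto simp: z_def u_def)
  have sinh: "2 * u \<le> exp u - exp (- u)"
    using real_le_x_sinh[of u] u by (simp add: exp_minus)
  have pw: "exp (- t * real l) ^ n = z ^ l" for l
    by (simp add: z_def exp_of_nat_mult[symmetric] algebra_simps flip: exp_of_nat2_mult)
  then have "exp (- t * real l) ^ (2 * n) = z ^ (2 * l)" for l
    by (metis mult.commute power_mult)
  then have "(\<Sum>l\<in>{1..N}. (exp (- t * real l) ^ n - exp (- t * real l) ^ (2 * n)) / real n)
      = (\<Sum>l\<in>{1..N}. z ^ l - z ^ (2 * l)) / real n"
    using pw by (simp add: sum_divide_distrib)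
  also have "\<dots> \<le> (z / (1 - z\<^sup>2)) / real n"
    using sum_power_diff_le[OF z] n by (intro divide_right_mono) auto
  also have "z / (1 - z\<^sup>2) = 1 / (exp u - exp (- u))"
  proof -
    have zz: "z = exp (- u)" by (simp add: z_def u_def)
    have "exp u * exp (- u) = 1" by (simp add: exp_minus)
    moreover have "exp (- u) ^ 2 = exp (- u) * exp (- u)" by (simp add: power2_eq_square)
    moreover have "exp u - exp (- u) \<noteq> 0" using sinh u by linarith
    moreover have "1 - exp (- u) * exp (- u) \<noteq> 0"
      using z zz by (metis mult_less_cancel_right2 order.strict_iff_not exp_gt_zero right_minus_eq)
    ultimately show ?thesis unfolding zz by (simp add: field_simps)
  qed
  also have "1 / (exp u - exp (- u)) / real n \<le> 1 / (2 * u) / real n"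
    using sinh u n by (intro divide_right_mono divide_left_mono) auto
  also have "\<dots> = 1 / (2 * t * (real n)\<^sup>2)" by (simp add: u_def power2_eq_square)
  finally show ?thesis .
qed

text \<open>Expand ln (1 + y) = \<Sum>n (y^n - y^(2n)) / n and swap the sums; the n-th term is at most
  1 / (n (e^(t n) - e^(-t n))) \<le> 1 / (2 t n^2), and \<Sum> 1/n^2 = pi^2/6.\<close>
lemma sum_ln_one_plus_exp_le:
  fixes t :: real
  assumes t: "t > 0"
  shows "(\<Sum>l\<in>{1..N}. ln (1 + exp (- t * real l))) \<le> pi\<^sup>2 / (12 * t)"
proof -
  define b where "b n = (if n = 0 then 0 else 1 / (2 * t * (real n)\<^sup>2))" for n :: nat
  have "(\<lambda>n. (1 / (2 * t)) * (1 / real ((n + 1)\<^sup>2))) sums ((1 / (2 * t)) * (pi\<^sup>2 / 6))"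
    by (rule sums_mult[OF inverse_squares_sums])
  moreover have "(\<lambda>n. b (Suc n)) = (\<lambda>n. (1 / (2 * t)) * (1 / real ((n + 1)\<^sup>2)))"
    by (rule ext) (simp add: b_def add.commute)
  ultimately have "(\<lambda>n. b (Suc n)) sums (pi\<^sup>2 / (12 * t))" by simp
  then have "b sums (pi\<^sup>2 / (12 * t) + b 0)" by (rule sums_Suc_iff[THEN iffD1])
  then have b: "b sums (pi\<^sup>2 / (12 * t))" by (simp add: b_def)
  have series: "(\<lambda>n. \<Sum>l\<in>{1..N}. (exp (- t * real l) ^ n - exp (- t * real l) ^ (2 * n)) / real n)
      sums (\<Sum>l\<in>{1..N}. ln (1 + exp (- t * real l)))"
    using t by (intro sums_sum ln_one_plus_sums) auto
  have "(\<Sum>l\<in>{1..N}. (exp (- t * real l) ^ n - exp (- t * real l) ^ (2 * n)) / real n) \<le> b n" for n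
    using ln_series_term_le[OF t, of n N] by (cases "n = 0") (simp_all add: b_def)
  then show ?thesis using series b by (rule sums_le)
qed

lemma card_Qset_le_card_subsets:
  "card (Qset N :: 'n::finite freq set) \<le> card {S \<in> Pow ((UNIV :: 'n set) \<times> {1..N}). (\<Sum>p\<in>S. snd p) \<le> N}"
proof -
  let ?W = "{S \<in> Pow ((UNIV :: 'n set) \<times> {1..N}). (\<Sum>p\<in>S. snd p) \<le> N}"
  have "digit_pairs ` (Qset N :: 'n freq set) \<subseteq> ?W"
  proof
    fix S :: "('n \<times> nat) set"
    assume "S \<in> digit_pairs ` Qset N"
    then obtain k where k: "k \<in> Qset N" "S = digit_pairs k" by blast
    have "S \<subseteq> UNIV \<times> {1..N}" using k digits_ge_1 Qset_digit_le[OF k(1)] by auto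
    moreover have "(\<Sum>p\<in>S. snd p) = knorm k"
      unfolding k(2) knorm_def sum_digit_pairs by (simp add: case_prod_unfold)
    ultimately show "S \<in> ?W" using k(1) by (simp add: Qset_def)
  qed
  then have "card (digit_pairs ` (Qset N :: 'n freq set)) \<le> card ?W" by (rule card_mono[rotated]) simp
  moreover have "card (digit_pairs ` (Qset N :: 'n freq set)) = card (Qset N :: 'n freq set)"
    by (rule card_image[OF inj_on_subset[OF inj_digit_pairs]]) simp
  ultimately show ?thesis by simp
qed

lemma indicator_le_exp_weight:
  fixes t :: real and S :: "('a \<times> nat) set"
  assumes t: "t > 0" and S: "finite S"
  shows "of_bool ((\<Sum>p\<in>S. snd p) \<le> N) \<le> exp (t * real N) * (\<Prod>p\<in>S. exp (- t * real (snd p)))"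
proof -
  define w where "w = (\<Sum>p\<in>S. snd p)"
  have "(\<Prod>p\<in>S. exp (- t * real (snd p))) = exp (\<Sum>p\<in>S. - t * real (snd p))"
    by (rule exp_sum[OF S, symmetric])
  also have "(\<Sum>p\<in>S. - t * real (snd p)) = - t * real w"
    by (simp add: w_def sum_distrib_left)
  finally have "exp (t * real N) * (\<Prod>p\<in>S. exp (- t * real (snd p))) = exp (t * (real N - real w))"
    by (simp add: algebra_simps flip: exp_add)
  moreover have "0 \<le> t * (real N - real w)" if "w \<le> N" using t that by simp
  ultimately show ?thesis
    unfolding w_def[symmetric] by (cases "w \<le> N") (simp_all add: prod_nonneg)
qed

text \<open>Rankin's trick: Q_N embeds into the sets S of positions (j, l) of total weight
  \<Sum>l \<le> N, whose indicator is at most exp (t (N - \<Sum>l)); summed over all S, this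
  bound factorizes over the positions.\<close>
lemma card_Qset_le_exp:
  fixes t :: real
  assumes t: "t > 0"
  shows "real (card (Qset N :: 'n::finite freq set)) \<le> exp (t * real N) * exp (real CARD('n) * pi\<^sup>2 / (12 * t))"
proof -
  define P where "P = (UNIV :: 'n set) \<times> {1..N}"
  have finP: "finite P" by (simp add: P_def)
  have "real (card (Qset N :: 'n freq set)) \<le> (\<Sum>S\<in>Pow P. of_bool ((\<Sum>p\<in>S. snd p) \<le> N))"
    using card_Qset_le_card_subsets[of N, where 'n='n] finP by (simp add: P_def Int_def)
  also have "\<dots> \<le> (\<Sum>S\<in>Pow P. exp (t * real N) * (\<Prod>p\<in>S. exp (- t * real (snd p))))"
    using finP by (intro sum_mono indicator_le_exp_weight[OF t]) (auto intro: finite_subset)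
  also have "\<dots> = exp (t * real N) * (\<Prod>p\<in>P. 1 + exp (- t * real (snd p)))"
    using prod_add[OF finP, of "\<lambda>p. exp (- t * real (snd p))" "\<lambda>_. 1"]
    by (simp add: sum_distrib_left add.commute)
  also have "(\<Prod>p\<in>P. 1 + exp (- t * real (snd p))) = (\<Prod>l\<in>{1..N}. 1 + exp (- t * real l)) ^ CARD('n)"
  proof -
    have "(\<Prod>p\<in>P. 1 + exp (- t * real (snd p))) = (\<Prod>j\<in>(UNIV::'n set). \<Prod>l\<in>{1..N}. 1 + exp (- t * real l))"
      unfolding P_def by (subst prod.cartesian_product) (simp add: case_prod_unfold)
    then show ?thesis by simp
  qed
  also have "(\<Prod>l\<in>{1..N}. 1 + exp (- t * real l)) = exp (\<Sum>l\<in>{1..N}. ln (1 + exp (- t * real l)))"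
    by (simp add: exp_sum add_pos_pos)
  also have "exp (\<Sum>l\<in>{1..N}. ln (1 + exp (- t * real l))) ^ CARD('n) \<le> exp (pi\<^sup>2 / (12 * t)) ^ CARD('n)"
    using sum_ln_one_plus_exp_le[OF t, of N] by (intro power_mono) auto
  also have "exp (pi\<^sup>2 / (12 * t)) ^ CARD('n) = exp (real CARD('n) * pi\<^sup>2 / (12 * t))"
    by (simp add: exp_of_nat_mult[symmetric])
  finally show ?thesis by (simp add: mult_left_mono)
qed

lemma card_Qset_le:
  assumes N: "N \<ge> 1"
  shows "real (card (Qset N :: 'n::finite freq set)) \<le> exp (pi * sqrt (real CARD('n) * real N / 3))"
proof -
  define s where "s = real CARD('n)"
  define a where "a = sqrt (s * real N / 12)"
  have s: "s > 0" by (simp add: s_def)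
  have a: "a > 0" using s N by (simp add: a_def)
  have a2: "a\<^sup>2 = s * real N / 12" using s N by (simp add: a_def)
  define t where "t = pi * a / real N"
  have t: "t > 0" using a N by (simp add: t_def)
  have "real (card (Qset N :: 'n freq set)) \<le> exp (t * real N) * exp (s * pi\<^sup>2 / (12 * t))"
    using card_Qset_le_exp[OF t, of N] by (simp add: s_def)
  also have "\<dots> = exp (pi * (2 * a))"
  proof -
    have "t * real N = pi * a" using N by (simp add: t_def)
    moreover have "s * pi\<^sup>2 / (12 * t) = pi * a"
      using N a a2 by (simp add: t_def field_simps power2_eq_square)
    ultimately show ?thesis by (simp flip: exp_add)
  qed
  also have "2 * a = sqrt (s * real N / 3)"
  proof -
    have "sqrt (s * real N / 3) = sqrt (4 * (s * real N / 12))" by simp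
    also have "\<dots> = sqrt 4 * sqrt (s * real N / 12)" by (rule real_sqrt_mult)
    finally show ?thesis by (simp add: a_def)
  qed
  finally show ?thesis by (simp add: s_def)
qed

lemma Nm_bounds:
  fixes c :: real
  assumes c: "c > 0" and big: "c * real m + 1 < 2 ^ m"
  shows "real (card (Qset (Nm TYPE('n::finite) c m) :: 'n freq set)) \<le> c * real m * 2 ^ m"
    and "Nm TYPE('n) c m < (2 * m) * (2 * m)"
    and "\<And>N. real (card (Qset N :: 'n freq set)) \<le> c * real m * 2 ^ m \<Longrightarrow> N \<le> Nm TYPE('n) c m"
proof -
  define S where "S = {N. real (card (Qset N :: 'n freq set)) \<le> c * real m * 2 ^ m}"
  have Nm_eq: "Nm TYPE('n) c m = Sup S" by (simp add: Nm_def S_def)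
  have bound: "N < (2 * m) * (2 * m)" if "N \<in> S" for N
  proof (rule ccontr)
    assume "\<not> N < (2 * m) * (2 * m)"
    then have "card (Qset ((2 * m) * (2 * m)) :: 'n freq set) \<le> card (Qset N :: 'n freq set)"
      by (intro card_mono Qset_mono) auto
    then have "2 ^ (2 * m) - 1 \<le> real (card (Qset N :: 'n freq set))"
      using card_Qset_square_ge[of "2 * m", where 'n='n] by linarith
    moreover have "c * real m * 2 ^ m < 2 ^ (2 * m) - 1"
    proof -
      have "(2::real) ^ (2 * m) = 2 ^ m * 2 ^ m" by (simp add: mult_2 power_add)
      moreover have "(c * real m + 1) * 2 ^ m < 2 ^ m * 2 ^ m" using big by simp
      ultimately have "c * real m * 2 ^ m + 2 ^ m < 2 ^ (2 * m)" by (simp add: algebra_simps)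
      moreover have "(1::real) \<le> 2 ^ m" by simp
      ultimately show ?thesis by linarith
    qed
    ultimately show False using that by (simp add: S_def)
  qed
  have bdd: "bdd_above S" using bound by (meson bdd_above.I less_imp_le)
  have "finite S" using bound by (meson finite_nat_set_iff_bounded)
  moreover have "0 \<in> S" using c by (simp add: S_def)
  ultimately have mem: "Sup S \<in> S" by (metis Max_in cSup_eq_Max empty_iff)
  show "real (card (Qset (Nm TYPE('n) c m) :: 'n freq set)) \<le> c * real m * 2 ^ m"
    using mem unfolding Nm_eq by (simp add: S_def)
  show "Nm TYPE('n) c m < (2 * m) * (2 * m)" using bound[OF mem] unfolding Nm_eq .
  show "\<And>N. real (card (Qset N :: 'n freq set)) \<le> c * real m * 2 ^ m \<Longrightarrow> N \<le> Nm TYPE('n) c m"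
    unfolding Nm_eq by (rule cSup_upper[OF _ bdd]) (simp add: S_def)
qed

text \<open>The choice of lambda makes exp (pi sqrt (s N / 3)) = 2^m at N = lambda m^2 / s.\<close>
lemma Nm_ge:
  fixes c :: real
  assumes c: "c > 0" and big: "c * real m + 1 < 2 ^ m" and cm: "c * real m \<ge> 1"
    and N1: "lambda_const * (real m)\<^sup>2 / real CARD('n) \<ge> 1"
  shows "real (Nm TYPE('n::finite) c m) \<ge> lambda_const * (real m)\<^sup>2 / real CARD('n) - 1"
proof -
  define s where "s = real CARD('n)"
  define x where "x = lambda_const * (real m)\<^sup>2 / s"
  define N' where "N' = nat \<lfloor>x\<rfloor>"
  have s: "s > 0" by (simp add: s_def)
  have x1: "x \<ge> 1" using N1 by (simp add: x_def s_def)
  then have N'1: "N' \<ge> 1" and N'x: "real N' \<le> x" "real N' \<ge> x - 1"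
    unfolding N'_def by linarith+
  have "sqrt (s * real N' / 3) \<le> sqrt ((real m * ln 2 / pi)\<^sup>2)"
  proof (rule real_sqrt_le_mono)
    have "s * real N' / 3 \<le> s * x / 3" using N'x s by simp
    also have "\<dots> = (real m * ln 2 / pi)\<^sup>2"
      using s by (simp add: x_def lambda_const_def field_simps power2_eq_square)
    finally show "s * real N' / 3 \<le> (real m * ln 2 / pi)\<^sup>2" .
  qed
  also have "sqrt ((real m * ln 2 / pi)\<^sup>2) = real m * ln 2 / pi" by simp
  finally have "pi * sqrt (s * real N' / 3) \<le> real m * ln 2"
    using pi_gt_zero by (simp add: field_simps)
  then have "exp (pi * sqrt (s * real N' / 3)) \<le> exp (real m * ln 2)" by simp
  also have "\<dots> = 2 ^ m" by (simp add: exp_of_nat_mult)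
  also have "\<dots> \<le> c * real m * 2 ^ m" using cm by simp
  finally have "real (card (Qset N' :: 'n freq set)) \<le> c * real m * 2 ^ m"
    using card_Qset_le[OF N'1, where 'n='n] unfolding s_def by linarith
  then have "N' \<le> Nm TYPE('n) c m" by (rule Nm_bounds(3)[OF c big])
  then show ?thesis using N'x unfolding x_def s_def by linarith
qed

lemma Nm_properties:
  fixes B c :: real
  assumes B: "B > 0" and c_eq: "c = c_const TYPE('n::finite) B"
    and cm_ge: "c * real m \<ge> 1" and cm_exp: "c * real m + 1 < 2 ^ m"
    and m_sq: "lambda_const / real CARD('n) * (real m)\<^sup>2 \<ge> 2" and B_sq: "8 * c * real m \<ge> B\<^sup>2 + 1"
  shows "1 \<le> Nm TYPE('n) c m" and "real (Nm TYPE('n) c m) \<le> 4 * (real m)\<^sup>2"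
    and "4 * c * real m - 1 \<le> B * sqrt (real (Nm TYPE('n) c m))"
    and "real (card (Qset (Nm TYPE('n) c m) :: 'n freq set)) \<le> c * real m * 2 ^ m"
proof -
  define s where "s = real CARD('n)"
  define N where "N = Nm TYPE('n) c m"
  have s: "s > 0" by (simp add: s_def)
  have lam: "lambda_const > 0" by (simp add: lambda_const_def)
  have c: "c > 0" using B lam s by (simp add: c_eq c_const_def s_def)
  have Nlow: "real N \<ge> lambda_const * (real m)\<^sup>2 / s - 1"
    unfolding N_def s_def using m_sq by (intro Nm_ge[OF c cm_exp cm_ge]) (simp add: field_simps)
  moreover have "lambda_const * (real m)\<^sup>2 / s \<ge> 2" using m_sq by (simp add: s_def)
  ultimately have "real N \<ge> 1" by linarith
  then show "1 \<le> Nm TYPE('n) c m" by (simp add: N_def)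
  show "real (Nm TYPE('n) c m) \<le> 4 * (real m)\<^sup>2"
    using Nm_bounds(2)[OF c cm_exp, where 'n='n] by (simp add: power2_eq_square flip: of_nat_mult)
  show "real (card (Qset (Nm TYPE('n) c m) :: 'n freq set)) \<le> c * real m * 2 ^ m"
    by (rule Nm_bounds(1)[OF c cm_exp])
  have c2: "16 * c\<^sup>2 = B\<^sup>2 * lambda_const / s"
    using lam s by (simp add: c_eq c_const_def s_def power_mult_distrib power_divide)
  have "B\<^sup>2 * (lambda_const * (real m)\<^sup>2 / s - 1) = 16 * c\<^sup>2 * (real m)\<^sup>2 - B\<^sup>2"
    using c2 s by (simp add: field_simps)
  moreover have "(4 * c * real m - 1)\<^sup>2 = 16 * c\<^sup>2 * (real m)\<^sup>2 - 8 * c * real m + 1"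
    by (simp add: power2_eq_square algebra_simps)
  ultimately have "(4 * c * real m - 1)\<^sup>2 \<le> B\<^sup>2 * (lambda_const * (real m)\<^sup>2 / s - 1)"
    using B_sq by linarith
  also have "\<dots> \<le> B\<^sup>2 * real N" using Nlow by (intro mult_left_mono) auto
  finally have "sqrt ((4 * c * real m - 1)\<^sup>2) \<le> sqrt (B\<^sup>2 * real N)"
    by (rule real_sqrt_le_mono)
  then have "\<bar>4 * c * real m - 1\<bar> \<le> B * sqrt (real N)"
    using B by (simp add: real_sqrt_mult)
  then show "4 * c * real m - 1 \<le> B * sqrt (real (Nm TYPE('n) c m))" by (simp add: N_def)
qed

section \<open>Asymptotics\<close>

text \<open>Either x \<le> (q/2)^2, or q < 2 sqrt x = O(m^(3/4)) so that x^q = exp (O(m^(3/4) ln m)).\<close>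
lemma circuit_weight_le:
  fixes c K x m :: real and q :: nat
  assumes c: "c > 0" and K: "K \<ge> 1" and m: "m \<ge> 1" and x: "0 \<le> x" and xK: "x \<le> K * m powr (3/2)"
    and q: "3 \<le> q" "real q \<le> 2 * c * m"
    and log_growth: "2 * sqrt K * m powr (3/4) * ln (K * m powr (3/2)) \<le> 4 * c * m * ln (3/2)"
  shows "x ^ q * real q powr (- 4 * c * m) \<le> 2 powr (- 4 * c * m)"
proof -
  define r where "r = real q / 2"
  have r: "r \<ge> 3/2" using q by (simp add: r_def)
  have "x ^ q \<le> r powr (4 * c * m)"
  proof (cases "r\<^sup>2 \<ge> x")
    case True
    have "x ^ q \<le> (r\<^sup>2) ^ q" using True x by (intro power_mono) auto
    also have "\<dots> = r ^ (2 * q)" by (simp add: power_mult)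
    also have "\<dots> = r powr (real (2 * q))" by (rule powr_realpow[symmetric]) (use r in auto)
    also have "\<dots> \<le> r powr (4 * c * m)" using r q by (intro powr_mono) auto
    finally show ?thesis .
  next
    case False
    define L where "L = K * m powr (3/2)"
    have L1: "L \<ge> 1" unfolding L_def using K m by (simp add: ge_one_powr_ge_zero mult_ge1_I)
    have "r < sqrt x" using False by (intro real_less_rsqrt) simp
    also have "sqrt x \<le> sqrt L" using xK by (simp add: L_def)
    also have "sqrt L = sqrt K * m powr (3/4)"
    proof -
      have "sqrt (m powr (3/2)) = m powr (3/4)"
        using m by (simp add: powr_half_sqrt[symmetric] powr_powr)
      then show ?thesis by (simp add: L_def real_sqrt_mult)
    qed
    finally have qlt: "real q \<le> 2 * sqrt K * m powr (3/4)" unfolding r_def by simp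
    have "x ^ q \<le> L ^ q" using xK x by (intro power_mono) (auto simp: L_def)
    also have "\<dots> = L powr real q" using L1 by (simp add: powr_realpow)
    also have "\<dots> \<le> L powr (2 * sqrt K * m powr (3/4))" using L1 qlt by (intro powr_mono) auto
    also have "\<dots> = exp (2 * sqrt K * m powr (3/4) * ln L)" using L1 by (simp add: powr_def mult.commute)
    also have "\<dots> \<le> exp (4 * c * m * ln (3/2))" using log_growth by (simp add: L_def)
    also have "\<dots> = (3/2) powr (4 * c * m)" by (simp add: powr_def mult.commute)
    also have "\<dots> \<le> r powr (4 * c * m)" using r c m by (intro powr_mono2) auto
    finally show ?thesis .
  qed
  then have "x ^ q * real q powr (- 4 * c * m) \<le> r powr (4 * c * m) * real q powr (- 4 * c * m)"
    by (rule mult_right_mono) simp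
  also have "\<dots> = 2 powr (- 4 * c * m)"
    using q by (simp add: r_def powr_divide powr_minus field_simps)
  finally show ?thesis .
qed

lemma circuit_term_le:
  fixes c K x y m :: real and q :: nat
  assumes c: "c > 0" and K: "K \<ge> 1" and m: "m \<ge> 1" and x: "0 \<le> x" and xK: "x \<le> K * m powr (3/2)"
    and y: "y \<ge> 4 * c * m - 1" and q: "2 \<le> q" "real q \<le> 2 * c * m"
    and log_growth: "2 * sqrt K * m powr (3/4) * ln (K * m powr (3/2)) \<le> 4 * c * m * ln (3/2)"
  shows "x ^ q * real q powr (- y) \<le> 2 * (K\<^sup>2 * m ^ 3 + c * m) * 2 powr (- 4 * c * m)"
proof -
  have "real q powr (- y) \<le> real q powr (1 + (- 4 * c * m))"
    using q y by (intro powr_mono) auto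
  also have "\<dots> = real q powr 1 * real q powr (- 4 * c * m)" by (rule powr_add)
  also have "\<dots> = real q * real q powr (- 4 * c * m)" using q by simp
  finally have "x ^ q * real q powr (- y) \<le> x ^ q * (real q * real q powr (- 4 * c * m))"
    using x by (intro mult_left_mono) auto
  also have "\<dots> = real q * (x ^ q * real q powr (- 4 * c * m))" by (simp add: ac_simps)
  also have "\<dots> \<le> 2 * (K\<^sup>2 * m ^ 3) * 2 powr (- 4 * c * m) + 2 * c * m * 2 powr (- 4 * c * m)"
  proof (cases "q = 2")
    case True
    have "(m powr (3/2))\<^sup>2 = (m powr (3/2)) powr (real 2)" by (rule powr_realpow[symmetric]) (use m in simp)
    also have "\<dots> = m powr (real 3)" by (simp add: powr_powr)
    also have "\<dots> = m ^ 3" by (rule powr_realpow) (use m in simp)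
    finally have "x\<^sup>2 \<le> K\<^sup>2 * m ^ 3"
      using x xK power_mono[of x "K * m powr (3/2)" 2] by (simp add: power_mult_distrib)
    then have "real q * (x ^ q * real q powr (- 4 * c * m)) \<le> 2 * (K\<^sup>2 * m ^ 3) * 2 powr (- 4 * c * m)"
      using True by simp
    moreover have "0 \<le> 2 * c * m * 2 powr (- 4 * c * m)" using c m by simp
    ultimately show ?thesis by linarith
  next
    case False
    then have "x ^ q * real q powr (- 4 * c * m) \<le> 2 powr (- 4 * c * m)"
      using q by (intro circuit_weight_le[OF c K m x xK _ q(2) log_growth]) auto
    then have "real q * (x ^ q * real q powr (- 4 * c * m)) \<le> 2 * c * m * 2 powr (- 4 * c * m)"
      using q x by (intro mult_mono) auto
    then show ?thesis using K m by (simp add: add_increasing)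
  qed
  finally show ?thesis by (simp add: algebra_simps)
qed

lemma circuit_base_le:
  fixes A c K :: real and N m :: nat
  assumes c: "c > 0" and A: "A > 0" and m: "m \<ge> 1" and N: "real N \<le> 4 * (real m)\<^sup>2"
    and K: "c * A * sqrt 2 \<le> K"
  shows "c * real m * A * real N powr (1/4) \<le> K * real m powr (3/2)"
proof -
  have "real N powr (1/4) \<le> (4 * (real m)\<^sup>2) powr (1/4)"
    using N by (intro powr_mono2) auto
  also have "\<dots> = 4 powr (1/4) * ((real m)\<^sup>2) powr (1/4)"
    by (simp add: powr_mult)
  also have "(4::real) powr (1/4) = sqrt 2"
  proof -
    have e: "(2::real) powr 2 = 4" by simp
    have "(4::real) powr (1/4) = (2 powr 2) powr (1/4)" by (simp only: e)
    also have "\<dots> = 2 powr (2 * (1/4))" by (rule powr_powr)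
    finally show ?thesis by (simp add: powr_half_sqrt)
  qed
  also have "((real m)\<^sup>2) powr (1/4) = real m powr (1/2)"
    using m by (simp add: powr_def ln_realpow)
  finally have "c * real m * A * real N powr (1/4) \<le> c * real m * A * (sqrt 2 * real m powr (1/2))"
    using c A by (intro mult_left_mono) auto
  also have "\<dots> = (c * A * sqrt 2) * (real m * real m powr (1/2))"
    by (simp add: algebra_simps)
  also have "real m * real m powr (1/2) = real m powr (3/2)"
  proof -
    have "real m * real m powr (1/2) = real m powr 1 * real m powr (1/2)" using m by simp
    also have "\<dots> = real m powr (1 + 1/2)" by (rule powr_add[symmetric])
    finally show ?thesis by simp
  qed
  also have "(c * A * sqrt 2) * real m powr (3/2) \<le> K * real m powr (3/2)"
    using K by (rule mult_right_mono) simp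
  finally show ?thesis .
qed

lemma xor_circuits_term_le:
  fixes A B c K :: real
  assumes xb: "xor_bound TYPE('n::finite) A B" and A: "A > 0" and c: "c > 0" and m: "m \<ge> 1"
    and K: "K \<ge> 1" "c * A * sqrt 2 \<le> K"
    and N1: "N \<ge> 1" and N4: "real N \<le> 4 * (real m)\<^sup>2" and BN: "4 * c * real m - 1 \<le> B * sqrt (real N)"
    and cardQ: "real (card (Qset N :: 'n freq set)) \<le> c * real m * 2 ^ m"
    and log_growth: "2 * sqrt K * real m powr (3/4) * ln (K * real m powr (3/2)) \<le> 4 * c * real m * ln (3/2)"
    and q: "2 \<le> q" "real q \<le> 2 * c * real m"
  shows "real (card (xor_circuits N q :: 'n freq set set)) / 2 ^ (q * m)
     \<le> 2 * (K\<^sup>2 * real m ^ 3 + c * real m) * 2 powr (- 4 * c * real m)"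
proof -
  define x where "x = c * real m * A * real N powr (1/4)"
  define bound where "bound = A ^ q * real N powr (real q / 4) * real q powr (- B * sqrt (real N))"
  have "real (card (xor_circuits N q :: 'n freq set set)) \<le> real (card (Qset N :: 'n freq set)) ^ q * bound"
    using card_xor_circuits_le[of N q, where 'n='n] card_xor_tuples_le[OF xb N1 q(1)]
    unfolding bound_def by linarith
  then have "real (card (xor_circuits N q :: 'n freq set set)) / 2 ^ (q * m)
      \<le> (real (card (Qset N :: 'n freq set)) / 2 ^ m) ^ q * bound"
    by (simp add: power_divide power_mult mult.commute[of q] divide_right_mono)
  also have "\<dots> \<le> (c * real m) ^ q * bound"
    using cardQ A unfolding bound_def by (intro mult_right_mono power_mono) (auto simp: field_simps)
  also have "\<dots> = x ^ q * real q powr (- (B * sqrt (real N)))"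
  proof -
    have "real N powr (real q / 4) = (real N powr (1/4)) ^ q"
      using N1 by (simp add: powr_realpow[symmetric] powr_powr)
    then show ?thesis by (simp add: bound_def x_def power_mult_distrib)
  qed
  also have "\<dots> \<le> 2 * (K\<^sup>2 * real m ^ 3 + c * real m) * 2 powr (- 4 * c * real m)"
  proof (rule circuit_term_le[OF c K(1) _ _ _ _ q log_growth])
    show "0 \<le> x" using c A by (simp add: x_def)
    show "x \<le> K * real m powr (3/2)"
      unfolding x_def by (rule circuit_base_le[OF c A m N4 K(2)])
  qed (use m BN in auto)
  finally show ?thesis .
qed

lemma sum_xor_circuits_le:
  fixes A B c K :: real
  assumes xb: "xor_bound TYPE('n::finite) A B" and A: "A > 0" and c: "c > 0" and m: "m \<ge> 1"
    and K: "K \<ge> 1" "c * A * sqrt 2 \<le> K"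
    and N1: "N \<ge> 1" and N4: "real N \<le> 4 * (real m)\<^sup>2" and BN: "4 * c * real m - 1 \<le> B * sqrt (real N)"
    and cardQ: "real (card (Qset N :: 'n freq set)) \<le> c * real m * 2 ^ m"
    and log_growth: "2 * sqrt K * real m powr (3/4) * ln (K * real m powr (3/2)) \<le> 4 * c * real m * ln (3/2)"
    and poly_growth: "4 * c * real m * (K\<^sup>2 * real m ^ 3 + c * real m) \<le> real m ^ 5"
  shows "(\<Sum>q\<in>{2..nat \<lfloor>2 * (c * real m)\<rfloor>}. real (card (xor_circuits N q :: 'n freq set set)) / 2 ^ (q * m))
     \<le> real m ^ 5 * 2 powr (- 4 * c * real m)"
proof -
  let ?M = "nat \<lfloor>2 * (c * real m)\<rfloor>"
  have "real ?M = real_of_int \<lfloor>2 * (c * real m)\<rfloor>" using c by simp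
  then have M: "real ?M \<le> 2 * c * real m" by linarith
  have "(\<Sum>q\<in>{2..?M}. real (card (xor_circuits N q :: 'n freq set set)) / 2 ^ (q * m))
      \<le> real (card {2..?M}) * (2 * (K\<^sup>2 * real m ^ 3 + c * real m) * 2 powr (- 4 * c * real m))"
  proof (rule sum_bounded_above)
    fix q
    assume "q \<in> {2..?M}"
    then have "2 \<le> q" "real q \<le> 2 * c * real m" using M by auto
    then show "real (card (xor_circuits N q :: 'n freq set set)) / 2 ^ (q * m)
        \<le> 2 * (K\<^sup>2 * real m ^ 3 + c * real m) * 2 powr (- 4 * c * real m)"
      by (rule xor_circuits_term_le[OF xb A c m K N1 N4 BN cardQ log_growth])
  qed
  also have "\<dots> \<le> 2 * c * real m * (2 * (K\<^sup>2 * real m ^ 3 + c * real m) * 2 powr (- 4 * c * real m))"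
  proof (rule mult_right_mono)
    have "card {2..?M} \<le> ?M" by simp
    then show "real (card {2..?M}) \<le> 2 * c * real m" using M by linarith
  qed (use c in simp)
  also have "\<dots> = (4 * c * real m * (K\<^sup>2 * real m ^ 3 + c * real m)) * 2 powr (- 4 * c * real m)"
    by (simp add: algebra_simps)
  also have "\<dots> \<le> real m ^ 5 * 2 powr (- 4 * c * real m)"
    using poly_growth by (rule mult_right_mono) simp
  finally show ?thesis .
qed

lemma dependent_designs_ratio_le:
  fixes A B c K :: real
  assumes xb: "xor_bound TYPE('n::finite) A B" and A: "A > 0" and c: "c > 0" and m: "m \<ge> 1"
    and K: "K \<ge> 1" "c * A * sqrt 2 \<le> K"
    and N1: "N \<ge> 1" and N4: "real N \<le> 4 * (real m)\<^sup>2" and BN: "4 * c * real m - 1 \<le> B * sqrt (real N)"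
    and cardQ: "real (card (Qset N :: 'n freq set)) \<le> c * real m * 2 ^ m"
    and log_growth: "2 * sqrt K * real m powr (3/4) * ln (K * real m powr (3/2)) \<le> 4 * c * real m * ln (3/2)"
    and poly_growth: "4 * c * real m * (K\<^sup>2 * real m ^ 3 + c * real m) \<le> real m ^ 5"
  shows "real (card (dependent_designs N m :: 'n gen_matrix set)) / real (card (Cspace N m :: 'n gen_matrix set))
     \<le> 1 / (c * real m) + real m ^ 5 * 2 powr (- 4 * c * real m)"
proof -
  let ?CS = "Cspace N m :: 'n gen_matrix set"
  have a: "c * real m > 0" using c m by simp
  have mean: "real (card (Qset N :: 'n freq set)) / 2 ^ m \<le> c * real m"
    using cardQ by (simp add: divide_le_eq)
  have cs: "real (card ?CS) > 0" using card_Cspace_pos[of N m, where 'n='n] by simp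
  have "real (card ?CS)
        * (\<Sum>q\<in>{2..nat \<lfloor>2 * (c * real m)\<rfloor>}. real (card (xor_circuits N q :: 'n freq set set)) / 2 ^ (q * m))
      \<le> real (card ?CS) * (real m ^ 5 * 2 powr (- 4 * c * real m))"
    using cs by (intro mult_left_mono sum_xor_circuits_le[OF xb A c m K N1 N4 BN cardQ log_growth poly_growth]) simp
  then have "real (card (dependent_designs N m :: 'n gen_matrix set))
      \<le> real (card ?CS) / (c * real m) + real (card ?CS) * (real m ^ 5 * 2 powr (- 4 * c * real m))"
    using card_dependent_designs_le[OF a mean] by linarith
  then have "real (card (dependent_designs N m :: 'n gen_matrix set)) / real (card ?CS)
      \<le> (real (card ?CS) / (c * real m) + real (card ?CS) * (real m ^ 5 * 2 powr (- 4 * c * real m)))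
        / real (card ?CS)"
    using cs by (intro divide_right_mono) auto
  also have "\<dots> = 1 / (c * real m) + real m ^ 5 * 2 powr (- 4 * c * real m)"
    using cs by (simp add: add_divide_distrib)
  finally show ?thesis .
qed

lemma eventually_dependent_designs_ratio_le:
  fixes A B :: real
  assumes A: "A > 0" and B: "B > 0" and xb: "xor_bound TYPE('n::finite) A B"
  defines "c \<equiv> c_const TYPE('n) B"
  shows "\<forall>\<^sub>F m in sequentially.
    real (card (dependent_designs (Nm TYPE('n) c m) m :: 'n gen_matrix set))
      / real (card (Cspace (Nm TYPE('n) c m) m :: 'n gen_matrix set))
    \<le> 1 / (c * real m) + real m ^ 5 * 2 powr (- 4 * c * real m)"
proof -
  define \<kappa> where "\<kappa> = lambda_const / real CARD('n)"
  define K where "K = max 1 (c * A * sqrt 2)"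
  have \<kappa>: "\<kappa> > 0" by (simp add: \<kappa>_def lambda_const_def)
  have c: "c > 0" using B \<kappa> by (simp add: c_def c_const_def \<kappa>_def)
  have K: "K \<ge> 1" "c * A * sqrt 2 \<le> K" by (simp_all add: K_def)
  have "\<forall>\<^sub>F m in sequentially. 1 \<le> m" by (rule eventually_ge_at_top)
  moreover have "\<forall>\<^sub>F m in sequentially. c * real m \<ge> 1" using c by real_asymp
  moreover have "\<forall>\<^sub>F m in sequentially. c * real m + 1 < 2 powr real m" using c by real_asymp
  moreover have "\<forall>\<^sub>F m in sequentially. \<kappa> * (real m)\<^sup>2 \<ge> 2" using \<kappa> by real_asymp
  moreover have "\<forall>\<^sub>F m in sequentially. 8 * c * real m \<ge> B\<^sup>2 + 1" using c by real_asymp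
  moreover have "\<forall>\<^sub>F m in sequentially.
      2 * sqrt K * real m powr (3/4) * ln (K * real m powr (3/2)) \<le> 4 * c * real m * ln (3/2)"
    using c K by real_asymp
  moreover have "\<forall>\<^sub>F m in sequentially. 4 * c * real m * (K\<^sup>2 * real m ^ 3 + c * real m) \<le> real m ^ 5"
    using c K by real_asymp
  ultimately show ?thesis
  proof eventually_elim
    case (elim m)
    then have cm_exp: "c * real m + 1 < 2 ^ m" by (simp add: powr_realpow)
    have m_sq: "lambda_const / real CARD('n) * (real m)\<^sup>2 \<ge> 2" using elim by (simp add: \<kappa>_def)
    have "c = c_const TYPE('n) B" by (simp add: c_def)
    note N = Nm_properties[OF B this elim(2) cm_exp m_sq elim(5)]
    show ?case by (rule dependent_designs_ratio_le[OF xb A c elim(1) K N elim(6) elim(7)])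
  qed
qed

theorem theorem2:
  fixes A B :: real
  assumes "A > 0" and "B > 0"
    and "xor_bound TYPE('n::finite) A B"
  shows "\<exists>(d::real) (m0::nat). \<forall>m. m0 \<le> m \<longrightarrow> 1 \<le> m \<longrightarrow>
     (\<forall>f :: real^'n \<Rightarrow> real. Cinf_on (cbox 0 One) f \<longrightarrow>
        (let c = c_const TYPE('n) B; N = Nm TYPE('n) c m in
         dTV (map_pmf (SUM1 f N m) (Omega N m)) (map_pmf (SUM1' f N m) (Omega N m))
           \<le> 1 / (c * real m) + real m powr d * 2 powr (- 4 * c * real m)))"
proof -
  define c where "c = c_const TYPE('n) B"
  obtain m0 where m0: "\<And>m. m \<ge> m0 \<Longrightarrow>
      real (card (dependent_designs (Nm TYPE('n) c m) m :: 'n gen_matrix set))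
        / real (card (Cspace (Nm TYPE('n) c m) m :: 'n gen_matrix set))
      \<le> 1 / (c * real m) + real m ^ 5 * 2 powr (- 4 * c * real m)"
    using eventually_dependent_designs_ratio_le[OF assms] unfolding c_def eventually_sequentially by blast
  show ?thesis
  proof (intro exI[of _ "5::real"] exI[of _ m0] allI impI)
    fix m :: nat and f :: "real^'n \<Rightarrow> real"
    assume "m0 \<le> m" "1 \<le> m"
    then show "let c = c_const TYPE('n) B; N = Nm TYPE('n) c m in
        dTV (map_pmf (SUM1 f N m) (Omega N m)) (map_pmf (SUM1' f N m) (Omega N m))
          \<le> 1 / (c * real m) + real m powr 5 * 2 powr (- 4 * c * real m)"
      using dTV_SUM1_SUM1'_le[of f "Nm TYPE('n) c m" m] m0[of m]
      unfolding Let_def c_def[symmetric] by (simp add: powr_realpow)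
  qed
qed

end
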